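(* Let $X\sim p^{\mathbb{Z}^d}$, $Y\sim q^{\mathbb{Z}^d}$ be i.i.d. processes over finite alphabets $A,B$ with equal entropy $h=h(p)=h(q)$, and let $\phi:X\to Y$ be a finitary homomorphism with $\mathbf{E}[R_\phi^{d/2}]<\infty$. Let $\delta_N\searrow0$ be a sequence such that $\mathbf{E}[|\mathcal{J}^c_{N,\lfloor\delta_N N\rfloor}|]=o(N^{d/2})$. For each large enough $N$ consider the $(\mathbb{T}_N^d,\lfloor\delta_N N\rfloor)$-modeling $\hat X\sim p^{\mathbb{T}_N^d}$, $\hat Y=\hat\phi^{\lfloor\delta_NN\rfloor}(\hat X)$. Then, as $N\to\infty$: (1) $\mathbf{E}[|\mathcal{J}^c_{N,\lfloor\delta_N N\rfloor}|]/\sqrt{|\mathbb{T}_N^d|}=o(1)$; (2) $\mathbf{E}\Big[\frac{1}{\sqrt{|\mathbb{T}_N^d|}}\sum_{u\in\mathbb{T}_N^d}(h+\log p(\hat X_u))\Big]^+=\frac{\sqrt{\mathrm{Var}(\log p(X_0))}}{\sqrt{2\pi}}\pm o(1)$; (3) $\mathbf{E}\Big[\frac{1}{\sqrt{|\mathbb{T}_N^d|}}\sum_{u\in\mathbb{T}_N^d:\ \hat Y_u\in B}(h+\log q(\hat Y_u))\Big]^+=\frac{\sqrt{\mathrm{Var}(\log q(Y_0))}}{\sqrt{2\pi}}\pm o(1)$.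
   Context: $c^+=\max(c,0)$; $h(p)=-\sum_a p_a\log p_a$. A homomorphism $\phi:X\to Y$ is a measurable shift-commuting map $A^{\mathbb{Z}^d}\to B^{\mathbb{Z}^d}$ pushing $\mu=p^{\mathbb{Z}^d}$ to $\nu=q^{\mathbb{Z}^d}$. Its coding radius is $R_\phi(x)=\min\{n\in\mathbb{N}\cup\{\infty\}:\text{for }\mu\text{-a.e. }a,\ a|_{[-n,n]^d}=x|_{[-n,n]^d}\Rightarrow\phi(a)_0=\phi(x)_0\}$; finitary means $R_\phi<\infty$ a.s. Let $*\notin B$; for $n\in\mathbb{N}$ put $\phi^n_0(x)=\phi(x)_0$ if $R_\phi(x)\le n$ and $*$ otherwise (a.e. a function of $x|_{[-n,n]^d}$). For $\mathbb{T}_N^d=\mathbb{Z}^d/(N\mathbb{Z})^d$ and $N\ge2n+1$, define $\hat\phi^n:A^{\mathbb{T}_N^d}\to(B\cup\{*\})^{\mathbb{T}_N^d}$ by letting $\hat\phi^n(\hat x)_u$ be $\phi^n_0$ evaluated at the $N$-periodic extension of $T_{-u}\hat x$, where $(T_{-u}\hat x)_v=\hat x_{v+u}$. The $(\mathbb{T}_N^d,n)$-modeling of $\phi$ is $\hat X\sim p^{\mathbb{T}_N^d}$, $\hat Y=\hat\phi^n(\hat X)$, and $\mathcal{J}^c_{N,n}=\{u\in\mathbb{T}_N^d:\hat Y_u=*\}$. *)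

theory Defs
  imports "HOL-Probability.Probability" "HOL-Library.Landau_Symbols"
begin

definition shannon_entropy :: "'a::finite pmf \<Rightarrow> real" where
  "shannon_entropy p = - (\<Sum>a\<in>UNIV. pmf p a * ln (pmf p a))"

text \<open>Configurations on Z^d are functions ('d \<Rightarrow> int) \<Rightarrow> 'a, with 'd a finite index type, d = CARD('d).\<close>
definition iid :: "'a pmf \<Rightarrow> (('d::finite \<Rightarrow> int) \<Rightarrow> 'a) measure" where
  "iid p = PiM UNIV (\<lambda>_. measure_pmf p)"

definition shiftZ :: "('d \<Rightarrow> int) \<Rightarrow> (('d \<Rightarrow> int) \<Rightarrow> 'a) \<Rightarrow> (('d \<Rightarrow> int) \<Rightarrow> 'a)" where
  "shiftZ v x = (\<lambda>u. x (\<lambda>i. u i + v i))"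

definition is_homomorphism ::
  "'a pmf \<Rightarrow> 'b pmf \<Rightarrow> ((('d::finite \<Rightarrow> int) \<Rightarrow> 'a) \<Rightarrow> (('d \<Rightarrow> int) \<Rightarrow> 'b)) \<Rightarrow> bool" where
  "is_homomorphism p q \<phi> \<longleftrightarrow>
     \<phi> \<in> measurable (iid p) (iid q) \<and>
     distr (iid p) (iid q) \<phi> = iid q \<and>
     (\<forall>v. AE x in iid p. \<phi> (shiftZ v x) = shiftZ v (\<phi> x))"

definition cube :: "nat \<Rightarrow> ('d \<Rightarrow> int) set" where
  "cube n = {v. \<forall>i. - int n \<le> v i \<and> v i \<le> int n}"

definition codes_within ::
  "'a pmf \<Rightarrow> ((('d::finite \<Rightarrow> int) \<Rightarrow> 'a) \<Rightarrow> (('d \<Rightarrow> int) \<Rightarrow> 'b)) \<Rightarrow> (('d \<Rightarrow> int) \<Rightarrow> 'a) \<Rightarrow> nat \<Rightarrow> bool" where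
  "codes_within p \<phi> x n \<longleftrightarrow>
     (AE a in iid p. restrict a (cube n) = restrict x (cube n) \<longrightarrow> \<phi> a (\<lambda>_. 0) = \<phi> x (\<lambda>_. 0))"

definition coding_radius ::
  "'a pmf \<Rightarrow> ((('d::finite \<Rightarrow> int) \<Rightarrow> 'a) \<Rightarrow> (('d \<Rightarrow> int) \<Rightarrow> 'b)) \<Rightarrow> (('d \<Rightarrow> int) \<Rightarrow> 'a) \<Rightarrow> enat" where
  "coding_radius p \<phi> x =
     (if \<exists>n. codes_within p \<phi> x n then enat (LEAST n. codes_within p \<phi> x n) else \<infinity>)"

definition finitary ::
  "'a pmf \<Rightarrow> ((('d::finite \<Rightarrow> int) \<Rightarrow> 'a) \<Rightarrow> (('d \<Rightarrow> int) \<Rightarrow> 'b)) \<Rightarrow> bool" where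
  "finitary p \<phi> \<longleftrightarrow> (AE x in iid p. coding_radius p \<phi> x \<noteq> \<infinity>)"

text \<open>phi^n_0 ; the extra symbol * is represented by None.\<close>
definition trunc_code ::
  "'a pmf \<Rightarrow> ((('d::finite \<Rightarrow> int) \<Rightarrow> 'a) \<Rightarrow> (('d \<Rightarrow> int) \<Rightarrow> 'b)) \<Rightarrow> nat \<Rightarrow> (('d \<Rightarrow> int) \<Rightarrow> 'a) \<Rightarrow> 'b option" where
  "trunc_code p \<phi> n x = (if coding_radius p \<phi> x \<le> enat n then Some (\<phi> x (\<lambda>_. 0)) else None)"

text \<open>The torus Z^d/(NZ)^d, represented by coordinates in {0..<N}.\<close>
definition torus :: "nat \<Rightarrow> ('d::finite \<Rightarrow> int) set" where
  "torus N = {u. \<forall>i. 0 \<le> u i \<and> u i < int N}"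

definition torus_iid :: "nat \<Rightarrow> 'a pmf \<Rightarrow> (('d::finite \<Rightarrow> int) \<Rightarrow> 'a) pmf" where
  "torus_iid N p = Pi_pmf (torus N) undefined (\<lambda>_. p)"

text \<open>hat phi^n(xh)_u, where f n is the window function with phi^n_0(x) = f n (x|_{[-n,n]^d}) a.e.;
  it is evaluated on the window of the N-periodic extension of T_{-u} xh.\<close>
definition torus_code ::
  "(nat \<Rightarrow> (('d::finite \<Rightarrow> int) \<Rightarrow> 'a) \<Rightarrow> 'b option) \<Rightarrow> nat \<Rightarrow> nat \<Rightarrow> (('d \<Rightarrow> int) \<Rightarrow> 'a) \<Rightarrow> ('d \<Rightarrow> int) \<Rightarrow> 'b option" where
  "torus_code f N n xh u = f n (restrict (\<lambda>v. xh (\<lambda>i. (v i + u i) mod int N)) (cube n))"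

definition Jc ::
  "(nat \<Rightarrow> (('d::finite \<Rightarrow> int) \<Rightarrow> 'a) \<Rightarrow> 'b option) \<Rightarrow> nat \<Rightarrow> nat \<Rightarrow> (('d \<Rightarrow> int) \<Rightarrow> 'a) \<Rightarrow> ('d \<Rightarrow> int) set" where
  "Jc f N n xh = {u \<in> torus N. torus_code f N n xh u = None}"

end

theory Submission
  imports Defs
begin

text \<open>Part (1) is the hypothesis on \<open>\<J>\<^sup>c\<close> rescaled by \<open>|\<T>\<^sub>N\<^sup>d| = N\<^sup>d\<close>.
  In part (2) the summands \<open>h + log p(X\<^sub>u)\<close> are \<open>N\<^sup>d\<close> i.i.d.\ centred variables of variance
  \<open>\<sigma>\<^sup>2 = Var(log p(X\<^sub>0))\<close>, so the normalised sum converges in law to \<open>\<sigma> G\<close>; its second moments are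
  bounded, hence the expected positive part converges to \<open>\<sigma> E[G\<^sup>+] = \<sigma> / sqrt(2 \<pi>)\<close>.

  For part (3), a site at distance more than \<open>n\<close> from the boundary of the fundamental domain
  \<open>[0,N)\<^sup>d\<close> sees a window that does not wrap around, so the torus code there has the law of
  \<open>\<phi>\<^sup>n\<close> on \<open>\<int>\<^sup>d\<close>: it equals \<open>Y\<^sub>u\<close> except at the stars, and \<open>(Y\<^sub>u)\<close> is i.i.d.\ \<open>q\<close>.
  These \<open>(N - 2n)\<^sup>d\<close> interior sites carry the central limit theorem for \<open>q\<close>. Translating by
  \<open>N/2\<close> in the coordinates in which a site is near the boundary preserves the law of the torus
  configuration and moves the site into the interior; so each of the \<open>2\<^sup>d\<close> classes of boundary
  sites contributes at most the \<open>L\<^sup>2\<close> norm of an i.i.d.\ sum plus a multiple of \<open>|\<J>\<^sup>c|\<close> in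
  \<open>L\<^sup>1\<close>, which is
  \<open>O(sqrt(N\<^sup>d - (N - 2n)\<^sup>d)) + o(N\<^sup>d\<^sup>/\<^sup>2) = o(N\<^sup>d\<^sup>/\<^sup>2)\<close>.\<close>

section \<open>Finite product distributions and second moments\<close>

lemma PiM_pmf_restrict:
  fixes r :: "'c::finite pmf" and D :: "'i set" and F :: "('i \<Rightarrow> 'c) \<Rightarrow> real"
  assumes D: "finite D"
  shows "(\<lambda>x. F (restrict x D)) \<in> borel_measurable (PiM UNIV (\<lambda>_. measure_pmf r))"
    and "integrable (PiM UNIV (\<lambda>_. measure_pmf r)) (\<lambda>x. F (restrict x D))"
    and "integral\<^sup>L (PiM UNIV (\<lambda>_. measure_pmf r)) (\<lambda>x. F (restrict x D))
          = measure_pmf.expectation (Pi_pmf D undefined (\<lambda>_. r)) F"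
proof -
  define M where "M = PiM (UNIV::'i set) (\<lambda>_. measure_pmf r)"
  interpret M: prob_space M
    unfolding M_def by (intro prob_space_PiM) (simp add: measure_pmf.prob_space_axioms)
  define Z where "Z = PiE D (\<lambda>_. UNIV::'c set)"
  define C where "C z = prod_emb UNIV (\<lambda>_. measure_pmf r) D (PiE D (\<lambda>v. {z v}))" for z :: "'i \<Rightarrow> 'c"
  have finZ: "finite Z" unfolding Z_def using D by (intro finite_PiE) auto
  have C_sets: "C z \<in> sets M" for z
    unfolding C_def M_def by (intro sets_PiM_I D) auto
  have mem_C: "x \<in> C z \<longleftrightarrow> restrict x D = z" if "z \<in> Z" for x z
    using that unfolding C_def Z_def prod_emb_def
    by (auto simp: space_PiM PiE_iff extensional_def restrict_def fun_eq_iff)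
  have simple: "F (restrict x D) = (\<Sum>z\<in>Z. F z * indicator (C z) x)" for x
  proof -
    have xZ: "restrict x D \<in> Z" unfolding Z_def by auto
    have "(\<Sum>z\<in>Z. F z * indicator (C z) x) = (\<Sum>z\<in>{restrict x D}. F z * indicator (C z) x)"
      by (rule sum.mono_neutral_right[OF finZ]) (use xZ mem_C in \<open>auto simp: indicator_def\<close>)
    then show ?thesis using mem_C[OF xZ] by simp
  qed
  have C_integrable: "integrable M (\<lambda>x. F z * indicator (C z) x)" for z
    using C_sets by (auto intro!: integrable_mult_right integrable_real_indicator simp: M.emeasure_eq_measure)
  show "(\<lambda>x. F (restrict x D)) \<in> borel_measurable (PiM UNIV (\<lambda>_. measure_pmf r))"
    unfolding M_def[symmetric] simple using C_sets by measurable
  show "integrable (PiM UNIV (\<lambda>_. measure_pmf r)) (\<lambda>x. F (restrict x D))"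
    unfolding M_def[symmetric] simple using C_integrable by auto
  have measure_C: "measure M (C z) = pmf (Pi_pmf D undefined (\<lambda>_. r)) z" if "z \<in> Z" for z
  proof -
    have "emeasure M (C z) = (\<Prod>v\<in>D. emeasure (measure_pmf r) {z v})"
      unfolding M_def C_def by (intro emeasure_PiM_emb) (auto simp: D measure_pmf.prob_space_axioms)
    moreover have "\<And>v. v \<notin> D \<Longrightarrow> z v = undefined"
      using that unfolding Z_def by (auto simp: PiE_iff extensional_def)
    ultimately show ?thesis
      by (simp add: emeasure_pmf_single prod_ennreal M.emeasure_eq_measure prod_nonneg pmf_Pi D)
  qed
  have "integral\<^sup>L M (\<lambda>x. F (restrict x D)) = (\<Sum>z\<in>Z. F z * measure M (C z))"
    unfolding simple using C_integrable C_sets by (simp add: M.emeasure_eq_measure)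
  also have "\<dots> = (\<Sum>z\<in>Z. F z * pmf (Pi_pmf D undefined (\<lambda>_. r)) z)"
    by (simp add: measure_C)
  also have "\<dots> = measure_pmf.expectation (Pi_pmf D undefined (\<lambda>_. r)) F"
    using set_Pi_pmf_subset[OF D, of undefined "\<lambda>_. r"]
    by (intro integral_measure_pmf_real[symmetric, OF finZ]) (auto simp: Z_def PiE_iff extensional_def)
  finally show "integral\<^sup>L (PiM UNIV (\<lambda>_. measure_pmf r)) (\<lambda>x. F (restrict x D))
          = measure_pmf.expectation (Pi_pmf D undefined (\<lambda>_. r)) F"
    unfolding M_def .
qed

lemma integrable_Pi_pmf_finite:
  fixes r :: "'c::finite pmf" and h :: "('i \<Rightarrow> 'c) \<Rightarrow> real"
  assumes "finite I"
  shows "integrable (measure_pmf (Pi_pmf I dflt (\<lambda>_. r))) h"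
  by (rule integrable_measure_pmf_finite, rule finite_subset[OF set_Pi_pmf_subset'[OF assms]])
     (auto intro!: finite_PiE_dflt assms)

lemma expectation_Pi_pmf_sum_square:
  fixes r :: "'c::finite pmf" and g :: "'c \<Rightarrow> real"
  assumes P: "finite P" and mean0: "measure_pmf.expectation r g = 0"
  shows "measure_pmf.expectation (Pi_pmf P undefined (\<lambda>_. r)) (\<lambda>y. (\<Sum>u\<in>P. g (y u))\<^sup>2)
          = real (card P) * measure_pmf.expectation r (\<lambda>a. (g a)\<^sup>2)"
proof -
  let ?Q = "Pi_pmf P undefined (\<lambda>_. r)"
  note int_Q = integrable_Pi_pmf_finite[OF P]
  have component: "measure_pmf.expectation ?Q (\<lambda>y. h (y u)) = measure_pmf.expectation r h"
    if "u \<in> P" for u and h :: "'c \<Rightarrow> real"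
    using that P by (metis Pi_pmf_component integral_map_pmf)
  have uncorrelated: "measure_pmf.expectation ?Q (\<lambda>y. g (y u) * g (y v)) = 0"
    if "u \<in> P" "v \<in> P" "u \<noteq> v" for u v
  proof -
    have "prob_space.indep_vars (measure_pmf ?Q) (\<lambda>_. count_space UNIV) (\<lambda>x f. f x) {u, v}"
      by (rule prob_space.indep_vars_subset[OF _ indep_vars_Pi_pmf[OF P]]) (use that in \<open>auto simp: measure_pmf.prob_space_axioms\<close>)
    then have "prob_space.indep_vars (measure_pmf ?Q) (\<lambda>_. borel) (\<lambda>i y. g (y i)) {u, v}"
      by (rule prob_space.indep_vars_compose2[OF measure_pmf.prob_space_axioms]) auto
    then have "measure_pmf.expectation ?Q (\<lambda>y. \<Prod>i\<in>{u,v}. g (y i))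
        = (\<Prod>i\<in>{u,v}. measure_pmf.expectation ?Q (\<lambda>y. g (y i)))"
      by (intro prob_space.indep_vars_lebesgue_integral) (auto simp: int_Q measure_pmf.prob_space_axioms)
    then show ?thesis using that by (simp add: component mean0)
  qed
  have diagonal: "(\<Sum>v\<in>P. measure_pmf.expectation ?Q (\<lambda>y. g (y u) * g (y v)))
      = measure_pmf.expectation r (\<lambda>a. (g a)\<^sup>2)" if u: "u \<in> P" for u
  proof -
    have "(\<Sum>v\<in>P. measure_pmf.expectation ?Q (\<lambda>y. g (y u) * g (y v)))
        = measure_pmf.expectation ?Q (\<lambda>y. g (y u) * g (y u))"
      using u uncorrelated by (subst sum.remove[OF P u]) (auto intro!: sum.neutral)
    then show ?thesis using component[OF u, of "\<lambda>a. (g a)\<^sup>2"] by (simp add: power2_eq_square)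
  qed
  have "measure_pmf.expectation ?Q (\<lambda>y. (\<Sum>u\<in>P. g (y u))\<^sup>2)
      = (\<Sum>u\<in>P. \<Sum>v\<in>P. measure_pmf.expectation ?Q (\<lambda>y. g (y u) * g (y v)))"
    by (simp add: power2_eq_square sum_product Bochner_Integration.integral_sum int_Q)
  then show ?thesis by (simp add: diagonal)
qed

lemma expectation_Pi_pmf_sum_reindex:
  fixes r :: "'c pmf" and g :: "'c \<Rightarrow> real" and F :: "real \<Rightarrow> real" and P :: "'i set"
  assumes P: "finite P"
  shows "measure_pmf.expectation (Pi_pmf P undefined (\<lambda>_. r)) (\<lambda>y. F (\<Sum>u\<in>P. g (y u)))
       = measure_pmf.expectation (Pi_pmf {..<card P} undefined (\<lambda>_. r)) (\<lambda>x. F (\<Sum>i<card P. g (x i)))"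
proof -
  obtain h0 where h0: "bij_betw h0 P {..<card P}"
    using ex_bij_betw_finite_nat[OF P] by (auto simp: atLeast0LessThan)
  define h where "h x = (if x \<in> P then h0 x else card P)" for x
  have h: "bij_betw h P {..<card P}"
    using h0 by (rule bij_betw_cong[THEN iffD1, rotated]) (simp add: h_def)
  have "Pi_pmf P undefined (\<lambda>_. r) = map_pmf (\<lambda>g. g \<circ> h) (Pi_pmf {..<card P} undefined (\<lambda>_. r))"
    by (rule Pi_pmf_bij_betw[OF P h]) (simp add: h_def)
  moreover have "(\<Sum>u\<in>P. g (x (h u))) = (\<Sum>i<card P. g (x i))" for x
    using sum.reindex_bij_betw[OF h, of "\<lambda>i. g (x i)"] .
  ultimately show ?thesis by simp
qed

lemma expectation_abs_le_sqrt:
  fixes f :: "'x \<Rightarrow> real"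
  assumes "prob_space M" and "integrable M f" and "integrable M (\<lambda>x. (f x)\<^sup>2)"
  shows "integral\<^sup>L M (\<lambda>x. \<bar>f x\<bar>) \<le> sqrt (integral\<^sup>L M (\<lambda>x. (f x)\<^sup>2))"
proof -
  interpret prob_space M by fact
  have "0 \<le> variance (\<lambda>x. \<bar>f x\<bar>)" by (rule variance_positive)
  then have "(expectation (\<lambda>x. \<bar>f x\<bar>))\<^sup>2 \<le> expectation (\<lambda>x. (f x)\<^sup>2)"
    using assms by (subst (asm) variance_eq) auto
  then show ?thesis by (rule real_le_rsqrt)
qed

section \<open>Central limit theorem for the positive part\<close>

lemma std_normal_expectation_pos_part:
  "integral\<^sup>L std_normal_distribution (\<lambda>z. max z 0) = 1 / sqrt (2 * pi)"
proof -
  have abs_moment: "has_bochner_integral lborel (\<lambda>x. std_normal_density x * \<bar>x\<bar>) (sqrt (2 / pi))"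
    using std_normal_moment_abs_odd[of 0] by simp
  have moment: "has_bochner_integral lborel (\<lambda>x. std_normal_density x * x) 0"
    using std_normal_moment_odd[of 0] by simp
  have "(\<lambda>x. std_normal_density x * max x 0)
      = (\<lambda>x. (std_normal_density x * \<bar>x\<bar> + std_normal_density x * x) / 2)"
    by (auto simp: max_def fun_eq_iff)
  then have "has_bochner_integral lborel (\<lambda>x. std_normal_density x * max x 0) (sqrt (2 / pi) / 2)"
    using has_bochner_integral_divide_zero[OF has_bochner_integral_add[OF abs_moment moment], of 2] by simp
  then have "integral\<^sup>L std_normal_distribution (\<lambda>z. max z 0) = sqrt (2 / pi) / 2"
    by (subst integral_density) (auto simp: normal_density_nonneg has_bochner_integral_integral_eq)
  also have "\<dots> = 1 / sqrt (2 * pi)"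
    by (simp add: real_sqrt_divide field_simps real_sqrt_mult)
  finally show ?thesis .
qed

lemma pos_part_minus_truncation_le:
  fixes K z :: real
  assumes "K > 0"
  shows "max z 0 - min (max z 0) K \<le> z\<^sup>2 / K"
proof (cases "z \<le> K")
  case False
  then have "z * 1 \<le> z * (z / K)" using assms by (intro mult_left_mono) auto
  then show ?thesis using False assms by (simp add: power2_eq_square)
qed (use assms in auto)

lemma integral_pos_part_truncation:
  fixes N :: "real measure" and K B :: real
  assumes "real_distribution N" and K: "K > 0"
    and square_int: "integrable N (\<lambda>z. z\<^sup>2)" and square_le: "integral\<^sup>L N (\<lambda>z. z\<^sup>2) \<le> B"
  shows "integrable N (\<lambda>z. max z 0)"
    and "\<bar>integral\<^sup>L N (\<lambda>z. max z 0) - integral\<^sup>L N (\<lambda>z. min (max z 0) K)\<bar> \<le> B / K"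
proof -
  interpret real_distribution N by fact
  have int_trunc: "integrable N (\<lambda>z. min (max z 0) K)"
    using K by (intro integrable_const_bound[where B=K]) auto
  show int_pos: "integrable N (\<lambda>z. max z 0)"
  proof (rule Bochner_Integration.integrable_bound[where f="\<lambda>z. 1 + z\<^sup>2"])
    show "AE z in N. norm (max z 0) \<le> norm (1 + z\<^sup>2)"
    proof (rule AE_I2)
      fix z :: real
      have "\<bar>z\<bar> \<le> 1 + z\<^sup>2"
        using zero_le_power2[of "\<bar>z\<bar> - 1"] by (simp add: power2_eq_square algebra_simps)
      then show "norm (max z 0) \<le> norm (1 + z\<^sup>2)" by (auto simp: max_def)
    qed
  qed (use square_int in auto)
  have "0 \<le> integral\<^sup>L N (\<lambda>z. max z 0 - min (max z 0) K)"
    by (intro integral_nonneg_AE) auto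
  moreover have "integral\<^sup>L N (\<lambda>z. max z 0 - min (max z 0) K) \<le> integral\<^sup>L N (\<lambda>z. z\<^sup>2 / K)"
    using int_pos int_trunc square_int pos_part_minus_truncation_le[OF K] by (intro integral_mono) auto
  moreover have "integral\<^sup>L N (\<lambda>z. z\<^sup>2 / K) \<le> B / K"
    using square_le K by (simp add: divide_right_mono)
  ultimately show "\<bar>integral\<^sup>L N (\<lambda>z. max z 0) - integral\<^sup>L N (\<lambda>z. min (max z 0) K)\<bar> \<le> B / K"
    using int_pos int_trunc by simp
qed

text \<open>Weak convergence alone does not move the unbounded functional \<open>z \<mapsto> z\<^sup>+\<close>; a uniform bound
  on second moments makes the truncation error \<open>B / K\<close> uniform.\<close>

lemma weak_conv_integral_pos_part:
  fixes \<mu> :: "nat \<Rightarrow> real measure" and M :: "real measure"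
  assumes \<mu>: "\<And>n. real_distribution (\<mu> n)" and M: "real_distribution M"
    and conv: "weak_conv_m \<mu> M"
    and \<mu>_square_int: "\<And>n. integrable (\<mu> n) (\<lambda>z. z\<^sup>2)"
    and \<mu>_square_le: "\<And>n. integral\<^sup>L (\<mu> n) (\<lambda>z. z\<^sup>2) \<le> B"
    and M_square_int: "integrable M (\<lambda>z. z\<^sup>2)" and M_square_le: "integral\<^sup>L M (\<lambda>z. z\<^sup>2) \<le> B"
  shows "(\<lambda>n. integral\<^sup>L (\<mu> n) (\<lambda>z. max z 0)) \<longlonglongrightarrow> integral\<^sup>L M (\<lambda>z. max z 0)"
proof (rule LIMSEQ_I)
  fix e :: real assume e: "0 < e"
  define K where "K = 3 * (\<bar>B\<bar> + 1) / e"
  have K: "K > 0" using e by (simp add: K_def)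
  have "B / K \<le> \<bar>B\<bar> / K" using K by (simp add: divide_right_mono)
  also have "\<dots> < e / 3" using e by (simp add: K_def field_simps)
  finally have BK: "B / K < e / 3" .
  have "(\<lambda>n. integral\<^sup>L (\<mu> n) (\<lambda>z. min (max z 0) K)) \<longlonglongrightarrow> integral\<^sup>L M (\<lambda>z. min (max z 0) K)"
    by (rule weak_conv_imp_integral_bdd_continuous_conv[OF \<mu> M conv, where B=K])
       (use K in \<open>auto intro!: continuous_intros\<close>)
  from LIMSEQ_D[OF this, of "e / 3"] e obtain n0 where n0: "\<And>n. n \<ge> n0 \<Longrightarrow>
      \<bar>integral\<^sup>L (\<mu> n) (\<lambda>z. min (max z 0) K) - integral\<^sup>L M (\<lambda>z. min (max z 0) K)\<bar> < e / 3"
    by auto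
  have "\<bar>integral\<^sup>L (\<mu> n) (\<lambda>z. max z 0) - integral\<^sup>L M (\<lambda>z. max z 0)\<bar> < e" if "n \<ge> n0" for n
    using n0[OF that] integral_pos_part_truncation(2)[OF \<mu> K \<mu>_square_int \<mu>_square_le, of n]
      integral_pos_part_truncation(2)[OF M K M_square_int M_square_le] BK
    by linarith
  then show "\<exists>n0. \<forall>n\<ge>n0. norm (integral\<^sup>L (\<mu> n) (\<lambda>z. max z 0) - integral\<^sup>L M (\<lambda>z. max z 0)) < e"
    by auto
qed

lemma PiM_pmf_sum_lessThan:
  fixes r :: "'c::finite pmf" and g :: "'c \<Rightarrow> real" and F :: "real \<Rightarrow> real" and n :: nat
  shows "(\<lambda>x. F (\<Sum>i<n. g (x i))) \<in> borel_measurable (PiM UNIV (\<lambda>_. measure_pmf r))"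
    and "integrable (PiM UNIV (\<lambda>_. measure_pmf r)) (\<lambda>x. F (\<Sum>i<n. g (x i)))"
    and "integral\<^sup>L (PiM UNIV (\<lambda>_. measure_pmf r)) (\<lambda>x. F (\<Sum>i<n. g (x i)))
          = measure_pmf.expectation (Pi_pmf {..<n} undefined (\<lambda>_. r)) (\<lambda>y. F (\<Sum>i<n. g (y i)))"
  using PiM_pmf_restrict[where D="{..<n}" and F="\<lambda>y. F (\<Sum>i<n. g (y i))" and r=r] by simp_all

lemma weak_conv_iid_normalized_sum:
  fixes r :: "'c::finite pmf" and g :: "'c \<Rightarrow> real"
  assumes mean0: "measure_pmf.expectation r g = 0"
    and \<sigma>: "\<sigma> > 0" and second_moment: "measure_pmf.expectation r (\<lambda>a. (g a)\<^sup>2) = \<sigma>\<^sup>2"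
  shows "weak_conv_m (\<lambda>n. distr (PiM UNIV (\<lambda>_. measure_pmf r)) borel
            (\<lambda>x. (\<Sum>i<n. g (x i)) / sqrt (real n * \<sigma>\<^sup>2))) std_normal_distribution"
proof -
  define M where "M = PiM (UNIV :: nat set) (\<lambda>_. measure_pmf r)"
  interpret M: prob_space M
    unfolding M_def by (intro prob_space_PiM) (simp add: measure_pmf.prob_space_axioms)
  have component_law: "distr M (measure_pmf r) (\<lambda>x. x i) = measure_pmf r" for i
    unfolding M_def by (rule distr_PiM_component) (auto simp: measure_pmf.prob_space_axioms)
  have "M.indep_vars (\<lambda>_. measure_pmf r) (\<lambda>i x. x i) UNIV"
  proof (subst M.indep_vars_iff_distr_eq_PiM)
    show "distr M (Pi\<^sub>M UNIV (\<lambda>i. measure_pmf r)) (\<lambda>x. \<lambda>i\<in>UNIV. x i)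
        = Pi\<^sub>M UNIV (\<lambda>i. distr M (measure_pmf r) (\<lambda>x. x i))"
      unfolding component_law unfolding M_def by (simp add: restrict_UNIV distr_id)
  qed (auto simp: M_def)
  then have indep: "M.indep_vars (\<lambda>_. borel) (\<lambda>i x. g (x i)) UNIV"
    by (rule M.indep_vars_compose2) simp
  have integral_component: "integral\<^sup>L M (\<lambda>x. h (x i)) = measure_pmf.expectation r h"
    for h :: "'c \<Rightarrow> real" and i
    using integral_distr[of "\<lambda>x. x i" M "measure_pmf r" h] component_law by (simp add: M_def)
  have integrable_component: "integrable M (\<lambda>x. h (x i))" for h :: "'c \<Rightarrow> real" and i
    using integrable_distr_eq[of "\<lambda>x. x i" M "measure_pmf r" h] component_law
    by (simp add: M_def integrable_measure_pmf_finite)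
  have law: "distr M borel (\<lambda>x. g (x i)) = distr (measure_pmf r) borel g" for i
    by (subst component_law[symmetric], subst distr_distr) (auto simp: M_def comp_def)
  have "weak_conv_m (\<lambda>n. distr M borel (\<lambda>x. (\<Sum>i<n. g (x i) - 0) / sqrt (n * \<sigma>\<^sup>2))) std_normal_distribution"
    by (rule M.central_limit_theorem[OF indep _ \<sigma> integrable_component _ law])
       (simp_all add: integral_component integral_component[of "\<lambda>a. (g a)\<^sup>2"] mean0 second_moment)
  then show ?thesis by (simp add: M_def)
qed

lemma clt_expectation_pos_part_normalized:
  fixes r :: "'c::finite pmf" and g :: "'c \<Rightarrow> real"
  assumes mean0: "measure_pmf.expectation r g = 0"
    and \<sigma>: "\<sigma> > 0" and second_moment: "measure_pmf.expectation r (\<lambda>a. (g a)\<^sup>2) = \<sigma>\<^sup>2"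
  shows "(\<lambda>n. measure_pmf.expectation (Pi_pmf {..<n} undefined (\<lambda>_. r))
              (\<lambda>y. max ((\<Sum>i<n. g (y i)) / sqrt (real n * \<sigma>\<^sup>2)) 0))
         \<longlonglongrightarrow> 1 / sqrt (2 * pi)"
proof -
  define M where "M = PiM (UNIV :: nat set) (\<lambda>_. measure_pmf r)"
  interpret M: prob_space M
    unfolding M_def by (intro prob_space_PiM) (simp add: measure_pmf.prob_space_axioms)
  define Z where "Z n x = (\<Sum>i<n. g (x i)) / sqrt (real n * \<sigma>\<^sup>2)" for n x
  define \<mu> where "\<mu> n = distr M borel (Z n)" for n
  have Z_measurable: "Z n \<in> borel_measurable M" for n
    using PiM_pmf_sum_lessThan(1)[where F="\<lambda>t. t / sqrt (real n * \<sigma>\<^sup>2)"]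
    unfolding Z_def M_def by simp
  have integral_\<mu>: "integral\<^sup>L (\<mu> n) F = measure_pmf.expectation (Pi_pmf {..<n} undefined (\<lambda>_. r))
      (\<lambda>y. F ((\<Sum>i<n. g (y i)) / sqrt (real n * \<sigma>\<^sup>2)))"
    if "F \<in> borel_measurable borel" for F :: "real \<Rightarrow> real" and n
    using that PiM_pmf_sum_lessThan(3)[where F="\<lambda>t. F (t / sqrt (real n * \<sigma>\<^sup>2))"]
    unfolding \<mu>_def by (subst integral_distr[OF Z_measurable]) (auto simp: Z_def M_def)
  have \<mu>_distribution: "real_distribution (\<mu> n)" for n
    unfolding \<mu>_def by (rule M.real_distribution_distr[OF Z_measurable])
  have \<mu>_square_int: "integrable (\<mu> n) (\<lambda>z. z\<^sup>2)" for n
    using PiM_pmf_sum_lessThan(2)[where F="\<lambda>t. (t / sqrt (real n * \<sigma>\<^sup>2))\<^sup>2"]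
    unfolding \<mu>_def by (subst integrable_distr_eq[OF Z_measurable]) (auto simp: Z_def M_def)
  have \<mu>_square_le: "integral\<^sup>L (\<mu> n) (\<lambda>z. z\<^sup>2) \<le> 1" for n
  proof -
    have "integral\<^sup>L (\<mu> n) (\<lambda>z. z\<^sup>2)
        = measure_pmf.expectation (Pi_pmf {..<n} undefined (\<lambda>_. r)) (\<lambda>y. (\<Sum>i<n. g (y i))\<^sup>2) / (n * \<sigma>\<^sup>2)"
      using \<sigma> by (simp add: integral_\<mu> power_divide)
    also have "\<dots> = n * \<sigma>\<^sup>2 / (n * \<sigma>\<^sup>2)"
      using expectation_Pi_pmf_sum_square[of "{..<n}" r g] mean0 second_moment by simp
    finally show ?thesis by simp
  qed
  have "(\<lambda>n. integral\<^sup>L (\<mu> n) (\<lambda>z. max z 0)) \<longlonglongrightarrow> 1 / sqrt (2 * pi)"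
    using weak_conv_integral_pos_part[OF \<mu>_distribution real_dist_normal_dist
        weak_conv_iid_normalized_sum[OF mean0 \<sigma> second_moment, folded M_def Z_def \<mu>_def]
        \<mu>_square_int \<mu>_square_le]
      std_normal_distribution_even_moments[of 1]
    by (simp add: std_normal_expectation_pos_part)
  then show ?thesis by (simp add: integral_\<mu>)
qed

lemma clt_expectation_pos_part:
  fixes r :: "'c::finite pmf" and g :: "'c \<Rightarrow> real"
  assumes mean0: "measure_pmf.expectation r g = 0"
  shows "(\<lambda>m. measure_pmf.expectation (Pi_pmf {..<m} undefined (\<lambda>_. r))
              (\<lambda>x. max ((\<Sum>i<m. g (x i)) / sqrt (real m)) 0))
         \<longlonglongrightarrow> sqrt (measure_pmf.expectation r (\<lambda>a. (g a)\<^sup>2)) / sqrt (2 * pi)"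
proof (cases "measure_pmf.expectation r (\<lambda>a. (g a)\<^sup>2) = 0")
  case True
  then have "AE a in r. (g a)\<^sup>2 = 0"
    by (subst (asm) integral_nonneg_eq_0_iff_AE) (auto simp: integrable_measure_pmf_finite)
  then have g0: "a \<in> set_pmf r \<Longrightarrow> g a = 0" for a by (simp add: AE_measure_pmf_iff)
  have "measure_pmf.expectation (Pi_pmf {..<m} undefined (\<lambda>_. r))
          (\<lambda>x. max ((\<Sum>i<m. g (x i)) / sqrt (real m)) 0) = 0" for m
  proof (rule integral_eq_zero_AE, rule AE_pmfI)
    fix x assume "x \<in> set_pmf (Pi_pmf {..<m} undefined (\<lambda>_. r))"
    then have "i < m \<Longrightarrow> x i \<in> set_pmf r" for i by (auto simp: set_Pi_pmf PiE_dflt_def)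
    then show "max ((\<Sum>i<m. g (x i)) / sqrt (real m)) 0 = 0" by (simp add: g0)
  qed
  then show ?thesis using True by simp
next
  case False
  define \<sigma> where "\<sigma> = sqrt (measure_pmf.expectation r (\<lambda>a. (g a)\<^sup>2))"
  have nonneg: "0 \<le> measure_pmf.expectation r (\<lambda>a. (g a)\<^sup>2)"
    by (intro integral_nonneg_AE) auto
  then have second_moment: "measure_pmf.expectation r (\<lambda>a. (g a)\<^sup>2) = \<sigma>\<^sup>2"
    unfolding \<sigma>_def by simp
  have \<sigma>: "\<sigma> > 0" unfolding \<sigma>_def using False nonneg by (intro real_sqrt_gt_zero) linarith
  have "max (s / sqrt (real m)) 0 = \<sigma> * max (s / sqrt (real m * \<sigma>\<^sup>2)) 0" for s m
    using \<sigma> by (simp add: max_mult_distrib_left real_sqrt_mult mult.commute)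
  then show ?thesis
    using tendsto_mult_left[OF clt_expectation_pos_part_normalized[OF mean0 \<sigma> second_moment], of \<sigma>]
    unfolding \<sigma>_def[symmetric] by simp
qed
section \<open>The i.i.d. field on the torus\<close>

lemma expectation_ln_pmf:
  fixes p :: "'a::finite pmf"
  shows "measure_pmf.expectation p (\<lambda>a. ln (pmf p a)) = - shannon_entropy p"
  unfolding shannon_entropy_def
  by (subst integral_measure_pmf_real[where A=UNIV]) (auto simp: mult.commute)

lemma expectation_entropy_plus_ln_pmf:
  fixes p :: "'a::finite pmf"
  shows "measure_pmf.expectation p (\<lambda>a. shannon_entropy p + ln (pmf p a)) = 0"
  by (simp add: expectation_ln_pmf integrable_measure_pmf_finite)

lemma variance_ln_pmf:
  fixes p :: "'a::finite pmf"
  shows "measure_pmf.variance p (\<lambda>a. ln (pmf p a))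
       = measure_pmf.expectation p (\<lambda>a. (shannon_entropy p + ln (pmf p a))\<^sup>2)"
  by (simp add: expectation_ln_pmf add.commute)

lemma torus_eq_PiE: "torus N = PiE UNIV (\<lambda>_. {0..<int N})"
  unfolding torus_def by (auto simp: PiE_iff)

lemma finite_torus: "finite (torus N :: ('d::finite \<Rightarrow> int) set)"
  by (simp add: torus_eq_PiE finite_PiE)

lemma card_torus: "card (torus N :: ('d::finite \<Rightarrow> int) set) = N ^ CARD('d)"
  by (simp add: torus_eq_PiE card_PiE)

lemma sqrt_card_torus:
  "sqrt (real (card (torus N :: ('d::finite \<Rightarrow> int) set))) = real N powr (real CARD('d) / 2)"
  by (simp add: card_torus powr_half_sqrt_powr powr_realpow')

lemma integrable_torus_iid:
  fixes p :: "'a::finite pmf" and h :: "(('d::finite \<Rightarrow> int) \<Rightarrow> 'a) \<Rightarrow> real"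
  shows "integrable (measure_pmf (torus_iid N p)) h"
  unfolding torus_iid_def by (rule integrable_Pi_pmf_finite[OF finite_torus])

lemma filterlim_power_at_top:
  fixes f :: "'x \<Rightarrow> nat"
  assumes "filterlim f at_top F" and "0 < d"
  shows "filterlim (\<lambda>x. f x ^ d) at_top F"
proof (rule filterlim_at_top_mono[OF assms(1)], rule always_eventually, rule allI)
  show "f x \<le> f x ^ d" for x
    using assms(2) by (cases "f x = 0") (auto intro: self_le_power)
qed

lemma torus_entropy_clt:
  fixes p :: "'a::finite pmf"
  shows "(\<lambda>N. measure_pmf.expectation (torus_iid N p)
              (\<lambda>xh :: ('d::finite \<Rightarrow> int) \<Rightarrow> 'a. max ((1 / sqrt (real (card (torus N :: ('d \<Rightarrow> int) set))))
                   * (\<Sum>u\<in>torus N. shannon_entropy p + ln (pmf p (xh u)))) 0))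
         \<longlonglongrightarrow> sqrt (measure_pmf.variance p (\<lambda>a. ln (pmf p a))) / sqrt (2 * pi)"
proof -
  define g where "g a = shannon_entropy p + ln (pmf p a)" for a
  define C where "C m = measure_pmf.expectation (Pi_pmf {..<m} undefined (\<lambda>_. p))
              (\<lambda>x. max ((\<Sum>i<m. g (x i)) / sqrt (real m)) 0)" for m
  have "C \<longlonglongrightarrow> sqrt (measure_pmf.variance p (\<lambda>a. ln (pmf p a))) / sqrt (2 * pi)"
    unfolding C_def variance_ln_pmf g_def by (rule clt_expectation_pos_part[OF expectation_entropy_plus_ln_pmf])
  then have "(\<lambda>N. C (N ^ CARD('d))) \<longlonglongrightarrow> sqrt (measure_pmf.variance p (\<lambda>a. ln (pmf p a))) / sqrt (2 * pi)"
    by (rule filterlim_compose) (intro filterlim_power_at_top filterlim_ident; simp)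
  moreover have "measure_pmf.expectation (torus_iid N p)
      (\<lambda>xh :: ('d \<Rightarrow> int) \<Rightarrow> 'a. max ((1 / sqrt (real (card (torus N :: ('d \<Rightarrow> int) set))))
        * (\<Sum>u\<in>torus N. shannon_entropy p + ln (pmf p (xh u)))) 0) = C (N ^ CARD('d))" for N
    using expectation_Pi_pmf_sum_reindex[OF finite_torus, where g=g and r=p
        and F="\<lambda>s. max (s / sqrt (real (card (torus N :: ('d \<Rightarrow> int) set)))) 0"]
    unfolding torus_iid_def C_def g_def by (simp add: card_torus)
  ultimately show ?thesis by simp
qed

section \<open>Coupling the torus modeling with the homomorphism\<close>

lemma measurable_shiftZ: "shiftZ u \<in> measurable (iid p) (iid p)"
proof -
  have "(\<lambda>x. \<lambda>v\<in>UNIV. x (\<lambda>i. v i + u i)) \<in> measurable (iid p) (iid p)"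
    unfolding iid_def by (intro measurable_restrict measurable_component_singleton) auto
  then show ?thesis unfolding shiftZ_def by (simp add: restrict_UNIV)
qed

lemma distr_iid_shiftZ: "distr (iid p) (iid p) (shiftZ (u :: 'd::finite \<Rightarrow> int)) = iid p"
proof -
  have "inj (\<lambda>v :: 'd \<Rightarrow> int. \<lambda>i. v i + u i)"
    by (auto simp: inj_on_def fun_eq_iff)
  then have "distr (PiM UNIV (\<lambda>_. measure_pmf p)) (PiM UNIV (\<lambda>_. measure_pmf p))
      (\<lambda>x. \<lambda>v\<in>UNIV. x (\<lambda>i. v i + u i)) = PiM UNIV (\<lambda>_. measure_pmf p)"
    using distr_PiM_reindex[of UNIV "\<lambda>_. measure_pmf p" "\<lambda>v i. v i + u i" UNIV]
    by (simp add: measure_pmf.prob_space_axioms)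
  then show ?thesis unfolding iid_def shiftZ_def by (simp add: restrict_UNIV)
qed

lemma AE_iid_shiftZ:
  assumes "AE x in iid p. P x"
  shows "AE x in iid p. P (shiftZ (u :: 'd::finite \<Rightarrow> int) x)"
  by (rule AE_distrD[OF measurable_shiftZ]) (subst distr_iid_shiftZ, rule assms)

lemma integral_sum_homomorphism:
  fixes p :: "'a pmf" and q :: "'b::finite pmf" and \<phi> :: "(('d::finite \<Rightarrow> int) \<Rightarrow> 'a) \<Rightarrow> (('d \<Rightarrow> int) \<Rightarrow> 'b)"
    and F :: "real \<Rightarrow> real" and g :: "'b \<Rightarrow> real"
  assumes hom: "is_homomorphism p q \<phi>" and Q: "finite Q"
  shows "(\<lambda>x. F (\<Sum>u\<in>Q. g (\<phi> x u))) \<in> borel_measurable (iid p)"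
    and "integrable (iid p) (\<lambda>x. F (\<Sum>u\<in>Q. g (\<phi> x u)))"
    and "integral\<^sup>L (iid p) (\<lambda>x. F (\<Sum>u\<in>Q. g (\<phi> x u)))
          = measure_pmf.expectation (Pi_pmf {..<card Q} undefined (\<lambda>_. q)) (\<lambda>y. F (\<Sum>i<card Q. g (y i)))"
proof -
  have \<phi>_measurable: "\<phi> \<in> measurable (iid p) (iid q)" and law: "distr (iid p) (iid q) \<phi> = iid q"
    using hom unfolding is_homomorphism_def by auto
  define G where "G y = F (\<Sum>u\<in>Q. g (y u))" for y :: "('d \<Rightarrow> int) \<Rightarrow> 'b"
  have G_restrict: "G y = G (restrict y Q)" for y
    unfolding G_def by (intro arg_cong[where f=F] sum.cong) auto
  note window = PiM_pmf_restrict[OF Q, where F=G and r=q, folded iid_def G_restrict]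
  show "(\<lambda>x. F (\<Sum>u\<in>Q. g (\<phi> x u))) \<in> borel_measurable (iid p)"
    using measurable_comp[OF \<phi>_measurable window(1)] by (simp add: G_def comp_def)
  show "integrable (iid p) (\<lambda>x. F (\<Sum>u\<in>Q. g (\<phi> x u)))"
    using window(2) integrable_distr_eq[OF \<phi>_measurable window(1)] law by (simp add: G_def)
  have "integral\<^sup>L (iid p) (\<lambda>x. F (\<Sum>u\<in>Q. g (\<phi> x u))) = integral\<^sup>L (iid q) G"
    using integral_distr[OF \<phi>_measurable window(1)] law by (simp add: G_def[abs_def])
  also have "\<dots> = measure_pmf.expectation (Pi_pmf {..<card Q} undefined (\<lambda>_. q)) (\<lambda>y. F (\<Sum>i<card Q. g (y i)))"
    unfolding window(3) G_def by (rule expectation_Pi_pmf_sum_reindex[OF Q])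
  finally show "integral\<^sup>L (iid p) (\<lambda>x. F (\<Sum>u\<in>Q. g (\<phi> x u)))
          = measure_pmf.expectation (Pi_pmf {..<card Q} undefined (\<lambda>_. q)) (\<lambda>y. F (\<Sum>i<card Q. g (y i)))" .
qed

text \<open>Almost surely \<open>lattice_code f n x u\<close> is \<open>\<phi>\<^sup>n\<^sub>0\<close> of \<open>x\<close> shifted by \<open>u\<close>; \<open>torus_code\<close> is the same
  construction applied to the periodic extension of a torus configuration.\<close>

definition lattice_code ::
  "(nat \<Rightarrow> (('d::finite \<Rightarrow> int) \<Rightarrow> 'a) \<Rightarrow> 'b option) \<Rightarrow> nat \<Rightarrow> (('d \<Rightarrow> int) \<Rightarrow> 'a) \<Rightarrow> ('d \<Rightarrow> int) \<Rightarrow> 'b option" where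
  "lattice_code f n x u = f n (restrict (shiftZ u x) (cube n))"

lemma AE_lattice_code:
  fixes p :: "'a pmf" and q :: "'b pmf" and \<phi> :: "(('d::finite \<Rightarrow> int) \<Rightarrow> 'a) \<Rightarrow> (('d \<Rightarrow> int) \<Rightarrow> 'b)"
  assumes hom: "is_homomorphism p q \<phi>"
    and local_fn: "\<forall>n. AE x in iid p. trunc_code p \<phi> n x = f n (restrict x (cube n))"
    and Q: "finite Q"
  shows "AE x in iid p. \<forall>u\<in>Q. lattice_code f n x u \<in> {None, Some (\<phi> x u)}"
proof (rule eventually_ball_finite[OF Q], intro ballI)
  fix u assume "u \<in> Q"
  have "AE x in iid p. trunc_code p \<phi> n (shiftZ u x) = lattice_code f n x u"
    unfolding lattice_code_def using local_fn by (intro AE_iid_shiftZ) blast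
  moreover have "AE x in iid p. \<phi> (shiftZ u x) = shiftZ u (\<phi> x)"
    using hom unfolding is_homomorphism_def by blast
  ultimately show "AE x in iid p. lattice_code f n x u \<in> {None, Some (\<phi> x u)}"
  proof eventually_elim
    case (elim x)
    have "\<phi> (shiftZ u x) (\<lambda>_. 0) = \<phi> x u"
      using fun_cong[OF elim(2), of "\<lambda>_. 0"] by (simp add: shiftZ_def)
    then show ?case using elim(1) by (auto simp: trunc_code_def split: if_splits)
  qed
qed

definition torus_interior :: "nat \<Rightarrow> nat \<Rightarrow> ('d::finite \<Rightarrow> int) set" where
  "torus_interior N n = {u. \<forall>i. int n \<le> u i \<and> u i + int n < int N}"

lemma torus_interior_plus_cube:
  assumes "u \<in> torus_interior N n" and "v \<in> cube n"
  shows "(\<lambda>i. v i + u i) \<in> torus N"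
proof -
  have "0 \<le> v i + u i \<and> v i + u i < int N" for i
    using assms unfolding torus_interior_def cube_def by (auto dest!: spec[of _ i])
  then show ?thesis unfolding torus_def by simp
qed

lemma torus_interior_subset: "torus_interior N n \<subseteq> torus N"
  using torus_interior_plus_cube[where v="\<lambda>_. 0"] by (force simp: cube_def)

lemma finite_torus_interior: "finite (torus_interior N n :: ('d::finite \<Rightarrow> int) set)"
  by (rule finite_subset[OF torus_interior_subset finite_torus])

lemma card_torus_interior:
  assumes "2 * n \<le> N"
  shows "card (torus_interior N n :: ('d::finite \<Rightarrow> int) set) = (N - 2 * n) ^ CARD('d)"
proof -
  have "torus_interior N n = PiE (UNIV :: 'd set) (\<lambda>_. {int n..<int N - int n})"
    unfolding torus_interior_def by (auto simp: PiE_iff less_diff_eq)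
  moreover have "nat (int N - int n - int n) = N - 2 * n" using assms by simp
  ultimately show ?thesis by (simp add: card_PiE)
qed

text \<open>Windows around interior sites do not wrap around, so there the torus code reads the same
  coordinates as the lattice code.\<close>

lemma torus_code_interior_law:
  fixes p :: "'a::finite pmf" and f :: "nat \<Rightarrow> (('d::finite \<Rightarrow> int) \<Rightarrow> 'a) \<Rightarrow> 'b option"
    and \<Phi> :: "(('d \<Rightarrow> int) \<Rightarrow> 'b option) \<Rightarrow> real"
  assumes Q: "Q \<subseteq> torus_interior N n"
  shows "(\<lambda>x. \<Phi> (restrict (lattice_code f n x) Q)) \<in> borel_measurable (iid p)"
    and "integrable (iid p) (\<lambda>x. \<Phi> (restrict (lattice_code f n x) Q))"
    and "measure_pmf.expectation (torus_iid N p) (\<lambda>xh. \<Phi> (restrict (torus_code f N n xh) Q))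
           = integral\<^sup>L (iid p) (\<lambda>x. \<Phi> (restrict (lattice_code f n x) Q))"
proof -
  have in_torus: "(\<lambda>i. v i + u i) \<in> torus N" if "u \<in> Q" "v \<in> cube n" for u v
    using that Q torus_interior_plus_cube by blast
  define G where "G z = \<Phi> (restrict (\<lambda>u. f n (restrict (\<lambda>v. z (\<lambda>i. v i + u i)) (cube n))) Q)"
    for z :: "('d \<Rightarrow> int) \<Rightarrow> 'a"
  have lattice: "\<Phi> (restrict (lattice_code f n x) Q) = G (restrict x (torus N))" for x
    unfolding G_def lattice_code_def shiftZ_def using in_torus
    by (intro arg_cong[where f=\<Phi>] restrict_ext arg_cong[where f="f n"]) auto
  have torus: "\<Phi> (restrict (torus_code f N n xh) Q) = G xh" for xh
    unfolding G_def torus_code_def using in_torus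
    by (intro arg_cong[where f=\<Phi>] restrict_ext arg_cong[where f="f n"]) (auto simp: torus_def)
  note window = PiM_pmf_restrict[OF finite_torus, where F=G and r=p, folded iid_def]
  show "(\<lambda>x. \<Phi> (restrict (lattice_code f n x) Q)) \<in> borel_measurable (iid p)"
    unfolding lattice by (rule window(1))
  show "integrable (iid p) (\<lambda>x. \<Phi> (restrict (lattice_code f n x) Q))"
    unfolding lattice by (rule window(2))
  show "measure_pmf.expectation (torus_iid N p) (\<lambda>xh. \<Phi> (restrict (torus_code f N n xh) Q))
      = integral\<^sup>L (iid p) (\<lambda>x. \<Phi> (restrict (lattice_code f n x) Q))"
    unfolding lattice torus window(3) torus_iid_def ..
qed

text \<open>For the torus code, \<open>observed_sum g Q\<close> is the sum over the sites of \<open>Q\<close> with \<open>\<hat>Y\<^sub>u \<in> B\<close>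
  in part (3), and \<open>stars Q\<close> is the part of \<open>\<J>\<^sup>c\<close> in \<open>Q\<close>.\<close>

definition observed_sum :: "('b \<Rightarrow> real) \<Rightarrow> 'i set \<Rightarrow> ('i \<Rightarrow> 'b option) \<Rightarrow> real" where
  "observed_sum g Q w = (\<Sum>u\<in>Q. case w u of None \<Rightarrow> 0 | Some b \<Rightarrow> g b)"

definition stars :: "'i set \<Rightarrow> ('i \<Rightarrow> 'b option) \<Rightarrow> 'i set" where
  "stars Q w = {u \<in> Q. w u = None}"

lemma observed_sum_restrict [simp]: "observed_sum g Q (restrict w Q) = observed_sum g Q w"
  unfolding observed_sum_def by (intro sum.cong) auto

lemma stars_restrict [simp]: "stars Q (restrict w Q) = stars Q w"
  unfolding stars_def by auto

lemma observed_sum_image: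
  "inj_on \<tau> P \<Longrightarrow> observed_sum g (\<tau> ` P) w = observed_sum g P (w \<circ> \<tau>)"
  unfolding observed_sum_def by (simp add: sum.reindex)

lemma card_stars_image:
  assumes "inj_on \<tau> P"
  shows "card (stars (\<tau> ` P) w) = card (stars P (w \<circ> \<tau>))"
proof -
  have "stars (\<tau> ` P) w = \<tau> ` stars P (w \<circ> \<tau>)" unfolding stars_def by auto
  moreover have "inj_on \<tau> (stars P (w \<circ> \<tau>))"
    using assms by (rule inj_on_subset) (auto simp: stars_def)
  ultimately show ?thesis by (simp add: card_image)
qed

lemma observed_sum_eq_sum_Some:
  "finite Q \<Longrightarrow> observed_sum g Q w = (\<Sum>u\<in>{u \<in> Q. w u \<noteq> None}. g (the (w u)))"
  unfolding observed_sum_def by (subst sum.inter_filter) (auto intro!: sum.cong split: option.split)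

lemma abs_observed_sum_diff_le:
  assumes Q: "finite Q" and w: "\<forall>u\<in>Q. w u \<in> {None, Some (y u)}" and C: "\<forall>b. \<bar>g b\<bar> \<le> C"
  shows "\<bar>observed_sum g Q w - (\<Sum>u\<in>Q. g (y u))\<bar> \<le> C * card (stars Q w)"
proof -
  have "\<bar>observed_sum g Q w - (\<Sum>u\<in>Q. g (y u))\<bar>
      \<le> (\<Sum>u\<in>Q. \<bar>(case w u of None \<Rightarrow> 0 | Some b \<Rightarrow> g b) - g (y u)\<bar>)"
    unfolding observed_sum_def sum_subtractf[symmetric] by (rule sum_abs)
  also have "\<dots> \<le> (\<Sum>u\<in>Q. if w u = None then C else 0)"
    using w C by (intro sum_mono) auto
  also have "\<dots> = C * card (stars Q w)"
    using Q by (simp add: sum.If_cases stars_def Int_def)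
  finally show ?thesis .
qed

text \<open>Both expectations are transferred to \<open>\<int>\<^sup>d\<close>, where the lattice code agrees with \<open>\<phi>\<close> off the
  stars and the values of \<open>\<phi>\<close> are i.i.d.\ with law \<open>q\<close>.\<close>

lemma torus_coupling_lipschitz:
  fixes p :: "'a::finite pmf" and q :: "'b::finite pmf"
    and \<phi> :: "(('d::finite \<Rightarrow> int) \<Rightarrow> 'a) \<Rightarrow> (('d \<Rightarrow> int) \<Rightarrow> 'b)"
    and f :: "nat \<Rightarrow> (('d \<Rightarrow> int) \<Rightarrow> 'a) \<Rightarrow> 'b option" and g :: "'b \<Rightarrow> real" and \<psi> :: "real \<Rightarrow> real"
  assumes hom: "is_homomorphism p q \<phi>"
    and local_fn: "\<forall>n. AE x in iid p. trunc_code p \<phi> n x = f n (restrict x (cube n))"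
    and Q: "Q \<subseteq> torus_interior N n"
    and g_bound: "\<forall>b. \<bar>g b\<bar> \<le> C" and lipschitz: "\<forall>s t. \<bar>\<psi> s - \<psi> t\<bar> \<le> L * \<bar>s - t\<bar>"
  shows "\<bar>measure_pmf.expectation (torus_iid N p) (\<lambda>xh. \<psi> (observed_sum g Q (torus_code f N n xh)))
          - measure_pmf.expectation (Pi_pmf {..<card Q} undefined (\<lambda>_. q)) (\<lambda>y. \<psi> (\<Sum>i<card Q. g (y i)))\<bar>
         \<le> L * C * measure_pmf.expectation (torus_iid N p) (\<lambda>xh. real (card (stars Q (torus_code f N n xh))))"
proof -
  have finQ: "finite Q" using Q finite_torus_interior by (rule finite_subset)
  have L: "L \<ge> 0" using lipschitz[rule_format, of 1 0] abs_ge_zero[of "\<psi> 1 - \<psi> 0"] by simp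
  define T where "T x = \<psi> (observed_sum g Q (lattice_code f n x))" for x
  define K where "K x = real (card (stars Q (lattice_code f n x)))" for x
  define S where "S x = \<psi> (\<Sum>u\<in>Q. g (\<phi> x u))" for x
  note law_T = torus_code_interior_law[OF Q, where \<Phi>="\<lambda>w. \<psi> (observed_sum g Q w)" and p=p and f=f,
      simplified, folded T_def]
  note law_K = torus_code_interior_law[OF Q, where \<Phi>="\<lambda>w. real (card (stars Q w))" and p=p and f=f,
      simplified, folded K_def]
  note law_S = integral_sum_homomorphism[OF hom finQ, where F=\<psi> and g=g, folded S_def]
  have "AE x in iid p. \<bar>T x - S x\<bar> \<le> L * C * K x"
    using AE_lattice_code[OF hom local_fn finQ, of n]
  proof eventually_elim
    case (elim x)
    have "\<bar>T x - S x\<bar> \<le> L * \<bar>observed_sum g Q (lattice_code f n x) - (\<Sum>u\<in>Q. g (\<phi> x u))\<bar>"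
      unfolding T_def S_def using lipschitz by blast
    also have "\<dots> \<le> L * (C * K x)"
      unfolding K_def by (intro mult_left_mono abs_observed_sum_diff_le finQ elim g_bound L)
    finally show ?case by simp
  qed
  then have "integral\<^sup>L (iid p) (\<lambda>x. \<bar>T x - S x\<bar>) \<le> integral\<^sup>L (iid p) (\<lambda>x. L * C * K x)"
    using law_T(2) law_S(2) law_K(2) by (intro integral_mono_AE) auto
  moreover have "\<bar>integral\<^sup>L (iid p) T - integral\<^sup>L (iid p) S\<bar> \<le> integral\<^sup>L (iid p) (\<lambda>x. \<bar>T x - S x\<bar>)"
    using law_T(2) law_S(2) by (simp add: integral_abs_bound flip: Bochner_Integration.integral_diff)
  ultimately show ?thesis
    unfolding law_T(3) law_K(3) law_S(3)[symmetric] by (simp add: S_def)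
qed

section \<open>Translating boundary sites into the interior\<close>

definition torus_translate :: "nat \<Rightarrow> ('d \<Rightarrow> int) \<Rightarrow> ('d \<Rightarrow> int) \<Rightarrow> ('d \<Rightarrow> int)" where
  "torus_translate N c u = (\<lambda>i. (u i + c i) mod int N)"

lemma bij_betw_torus_translate:
  assumes "N > 0"
  shows "bij_betw (torus_translate N c) (torus N) (torus N)"
proof (rule bij_betw_byWitness[where f'="torus_translate N (\<lambda>i. - c i)"])
  have mod_id: "u \<in> torus N \<Longrightarrow> u i mod int N = u i" for u i
    unfolding torus_def by auto
  show "\<forall>u\<in>torus N. torus_translate N (\<lambda>i. - c i) (torus_translate N c u) = u"
    by (auto simp: torus_translate_def mod_id mod_diff_left_eq fun_eq_iff)
  show "\<forall>u\<in>torus N. torus_translate N c (torus_translate N (\<lambda>i. - c i) u) = u"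
    by (auto simp: torus_translate_def mod_id mod_add_left_eq fun_eq_iff)
  show "torus_translate N c ` torus N \<subseteq> torus N" and "torus_translate N (\<lambda>i. - c i) ` torus N \<subseteq> torus N"
    using assms by (auto simp: torus_translate_def torus_def)
qed

text \<open>The law of the torus configuration is invariant under translations of the torus, and the
  torus code commutes with them.\<close>

lemma expectation_torus_code_translate:
  fixes p :: "'a pmf" and \<Phi> :: "(('d::finite \<Rightarrow> int) \<Rightarrow> 'b option) \<Rightarrow> real"
  assumes N: "N > 0"
  shows "measure_pmf.expectation (torus_iid N p) (\<lambda>xh. \<Phi> (torus_code f N n xh \<circ> torus_translate N c))
       = measure_pmf.expectation (torus_iid N p) (\<lambda>xh. \<Phi> (torus_code f N n xh))"
proof -
  define h where "h u = (if u \<in> torus N then torus_translate N c u else u)" for u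
  have h: "bij_betw h (torus N) (torus N)"
    using bij_betw_torus_translate[OF N] by (rule bij_betw_cong[THEN iffD1, rotated]) (simp add: h_def)
  have law: "torus_iid N p = map_pmf (\<lambda>xh. xh \<circ> h) (torus_iid N p)"
    unfolding torus_iid_def by (rule Pi_pmf_bij_betw[OF finite_torus h]) (simp add: h_def)
  have code: "torus_code f N n (xh \<circ> h) = torus_code f N n xh \<circ> torus_translate N c" for xh
  proof -
    have "(\<lambda>i. (v i + u i) mod int N) \<in> torus N" for u v :: "'d \<Rightarrow> int"
      using N by (simp add: torus_def)
    moreover have "torus_translate N c (\<lambda>i. (v i + u i) mod int N)
        = (\<lambda>i. (v i + torus_translate N c u i) mod int N)" for u v
      unfolding torus_translate_def by (simp add: fun_eq_iff mod_add_left_eq mod_add_right_eq add.assoc)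
    ultimately have "h (\<lambda>i. (v i + u i) mod int N) = (\<lambda>i. (v i + torus_translate N c u i) mod int N)" for u v
      by (simp add: h_def)
    then show ?thesis unfolding torus_code_def by (simp add: comp_def)
  qed
  have "measure_pmf.expectation (torus_iid N p) (\<lambda>xh. \<Phi> (torus_code f N n xh))
      = measure_pmf.expectation (map_pmf (\<lambda>xh. xh \<circ> h) (torus_iid N p)) (\<lambda>xh. \<Phi> (torus_code f N n xh))"
    by (subst law) (rule refl)
  then show ?thesis by (simp add: code)
qed

definition boundary_type :: "nat \<Rightarrow> nat \<Rightarrow> ('d \<Rightarrow> int) \<Rightarrow> ('d \<Rightarrow> bool)" where
  "boundary_type N n u = (\<lambda>i. \<not> (int n \<le> u i \<and> u i + int n < int N))"

definition torus_class :: "nat \<Rightarrow> nat \<Rightarrow> ('d \<Rightarrow> bool) \<Rightarrow> ('d::finite \<Rightarrow> int) set" where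
  "torus_class N n e = {u \<in> torus N. boundary_type N n u = e}"

definition half_shift :: "nat \<Rightarrow> ('d \<Rightarrow> bool) \<Rightarrow> ('d \<Rightarrow> int)" where
  "half_shift N e = (\<lambda>i. if e i then int (N div 2) else 0)"

lemma torus_translate_class_subset_interior:
  fixes e :: "'d::finite \<Rightarrow> bool"
  assumes N: "4 * n + 4 \<le> N"
  shows "torus_translate N (half_shift N e) ` torus_class N n e \<subseteq> torus_interior N n"
proof (safe, unfold torus_interior_def, intro CollectI allI)
  fix u :: "'d \<Rightarrow> int" and i assume u: "u \<in> torus_class N n e"
  define H where "H = int (N div 2)"
  have H: "2 * int n + 2 \<le> H" "H + H \<le> int N" using N unfolding H_def by linarith+
  have u_range: "0 \<le> u i" "u i < int N" and type: "boundary_type N n u i = e i"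
    using u unfolding torus_class_def torus_def by auto
  show "int n \<le> torus_translate N (half_shift N e) u i \<and> torus_translate N (half_shift N e) u i + int n < int N"
  proof (cases "e i")
    case False
    then show ?thesis using type u_range by (simp add: torus_translate_def half_shift_def boundary_type_def)
  next
    case True
    then have near: "u i < int n \<or> int N \<le> u i + int n" using type by (auto simp: boundary_type_def)
    show ?thesis
    proof (cases "u i < int n")
      case low: True
      have "(u i + H) mod int N = u i + H"
        using low u_range H by (intro mod_pos_pos_trivial) linarith+
      then show ?thesis using True low u_range H by (simp add: torus_translate_def half_shift_def H_def)
    next
      case high: False
      have "(u i + H) mod int N = (u i + H - int N) mod int N" by simp
      also have "\<dots> = u i + H - int N"
        using high near u_range H by (intro mod_pos_pos_trivial) linarith+
      finally show ?thesis using True high near u_range H by (simp add: torus_translate_def half_shift_def H_def)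
    qed
  qed
qed

lemma observed_sum_partition:
  assumes "finite S" "finite T" "f ` S \<subseteq> T"
  shows "observed_sum g S w = (\<Sum>t\<in>T. observed_sum g {u \<in> S. f u = t} w)"
  unfolding observed_sum_def using assms by (rule sum.group[symmetric])

lemma card_stars_partition:
  assumes "finite S" "finite T" "f ` S \<subseteq> T"
  shows "card (stars S w) = (\<Sum>t\<in>T. card (stars {u \<in> S. f u = t} w))"
proof -
  have "card (stars S w) = (\<Sum>u\<in>S. if w u = None then 1 else 0)"
    using assms(1) by (simp add: stars_def sum.If_cases Int_def)
  also have "\<dots> = (\<Sum>t\<in>T. \<Sum>u\<in>{u \<in> S. f u = t}. if w u = None then 1 else 0)"
    using assms by (rule sum.group[symmetric])
  also have "\<dots> = (\<Sum>t\<in>T. card (stars {u \<in> S. f u = t} w))"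
    using assms(1) by (intro sum.cong) (simp_all add: stars_def sum.If_cases Int_def conj_commute)
  finally show ?thesis .
qed

lemma expectation_abs_observed_sum_interior:
  fixes p :: "'a::finite pmf" and q :: "'b::finite pmf"
    and \<phi> :: "(('d::finite \<Rightarrow> int) \<Rightarrow> 'a) \<Rightarrow> (('d \<Rightarrow> int) \<Rightarrow> 'b)"
    and f :: "nat \<Rightarrow> (('d \<Rightarrow> int) \<Rightarrow> 'a) \<Rightarrow> 'b option" and g :: "'b \<Rightarrow> real"
  assumes hom: "is_homomorphism p q \<phi>"
    and local_fn: "\<forall>n. AE x in iid p. trunc_code p \<phi> n x = f n (restrict x (cube n))"
    and Q: "Q \<subseteq> torus_interior N n"
    and g_bound: "\<forall>b. \<bar>g b\<bar> \<le> C" and mean0: "measure_pmf.expectation q g = 0"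
  shows "measure_pmf.expectation (torus_iid N p) (\<lambda>xh. \<bar>observed_sum g Q (torus_code f N n xh)\<bar>)
    \<le> sqrt (real (card Q) * measure_pmf.expectation q (\<lambda>b. (g b)\<^sup>2))
      + C * measure_pmf.expectation (torus_iid N p) (\<lambda>xh. real (card (stars Q (torus_code f N n xh))))"
proof -
  let ?Y = "Pi_pmf {..<card Q} undefined (\<lambda>_. q)"
  have "measure_pmf.expectation ?Y (\<lambda>y. \<bar>\<Sum>i<card Q. g (y i)\<bar>)
      \<le> sqrt (measure_pmf.expectation ?Y (\<lambda>y. (\<Sum>i<card Q. g (y i))\<^sup>2))"
    by (intro expectation_abs_le_sqrt integrable_Pi_pmf_finite measure_pmf.prob_space_axioms) simp_all
  also have "\<dots> = sqrt (real (card Q) * measure_pmf.expectation q (\<lambda>b. (g b)\<^sup>2))"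
    using expectation_Pi_pmf_sum_square[of "{..<card Q}" q g] mean0 by simp
  finally have iid_bound: "measure_pmf.expectation ?Y (\<lambda>y. \<bar>\<Sum>i<card Q. g (y i)\<bar>)
      \<le> sqrt (real (card Q) * measure_pmf.expectation q (\<lambda>b. (g b)\<^sup>2))" .
  have "\<forall>s t :: real. \<bar>\<bar>s\<bar> - \<bar>t\<bar>\<bar> \<le> 1 * \<bar>s - t\<bar>"
    by (simp add: abs_triangle_ineq3)
  from torus_coupling_lipschitz[OF hom local_fn Q g_bound this] iid_bound
  show ?thesis by (simp add: abs_le_iff)
qed

lemma expectation_abs_observed_sum_class:
  fixes p :: "'a::finite pmf" and q :: "'b::finite pmf"
    and \<phi> :: "(('d::finite \<Rightarrow> int) \<Rightarrow> 'a) \<Rightarrow> (('d \<Rightarrow> int) \<Rightarrow> 'b)"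
    and f :: "nat \<Rightarrow> (('d \<Rightarrow> int) \<Rightarrow> 'a) \<Rightarrow> 'b option" and g :: "'b \<Rightarrow> real"
  assumes hom: "is_homomorphism p q \<phi>"
    and local_fn: "\<forall>n. AE x in iid p. trunc_code p \<phi> n x = f n (restrict x (cube n))"
    and N: "4 * n + 4 \<le> N"
    and g_bound: "\<forall>b. \<bar>g b\<bar> \<le> C" and mean0: "measure_pmf.expectation q g = 0"
  shows "measure_pmf.expectation (torus_iid N p)
        (\<lambda>xh. \<bar>observed_sum g (torus_class N n e) (torus_code f N n xh)\<bar>)
    \<le> sqrt (real (card (torus_class N n e)) * measure_pmf.expectation q (\<lambda>b. (g b)\<^sup>2))
      + C * measure_pmf.expectation (torus_iid N p)
        (\<lambda>xh. real (card (stars (torus_class N n e) (torus_code f N n xh))))"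
proof -
  define \<tau> where "\<tau> = torus_translate N (half_shift N e)"
  have "N > 0" using N by simp
  have "inj_on \<tau> (torus N)"
    using bij_betw_torus_translate[OF \<open>N > 0\<close>, of "half_shift N e"] unfolding \<tau>_def
    by (rule bij_betw_imp_inj_on)
  then have inj: "inj_on \<tau> (torus_class N n e)"
    by (rule inj_on_subset) (auto simp: torus_class_def)
  have translate: "measure_pmf.expectation (torus_iid N p) (\<lambda>xh. \<Phi> (torus_code f N n xh \<circ> \<tau>))
      = measure_pmf.expectation (torus_iid N p) (\<lambda>xh. \<Phi> (torus_code f N n xh))"
    for \<Phi> :: "(('d \<Rightarrow> int) \<Rightarrow> 'b option) \<Rightarrow> real"
    unfolding \<tau>_def using \<open>N > 0\<close> by (rule expectation_torus_code_translate)
  have "\<tau> ` torus_class N n e \<subseteq> torus_interior N n"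
    unfolding \<tau>_def by (rule torus_translate_class_subset_interior[OF N])
  from expectation_abs_observed_sum_interior[OF hom local_fn this g_bound mean0]
  show ?thesis
    by (simp add: observed_sum_image[OF inj] card_stars_image[OF inj] card_image[OF inj]
        translate[where \<Phi>="\<lambda>w. \<bar>observed_sum g (torus_class N n e) w\<bar>"]
        translate[where \<Phi>="\<lambda>w. real (card (stars (torus_class N n e) w))"])
qed

lemma boundary_type_eq_False_iff:
  "boundary_type N n u = (\<lambda>_. False) \<longleftrightarrow> u \<in> torus_interior N n"
  unfolding boundary_type_def torus_interior_def by (auto simp: fun_eq_iff)

lemma torus_class_subset_boundary:
  "e \<noteq> (\<lambda>_. False) \<Longrightarrow> torus_class N n e \<subseteq> torus N - torus_interior N n"
  unfolding torus_class_def using boundary_type_eq_False_iff by blast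

lemma torus_boundary_partition:
  fixes N n :: nat and w :: "('d::finite \<Rightarrow> int) \<Rightarrow> 'b option"
  defines "B \<equiv> torus N - torus_interior N n" and "R \<equiv> UNIV - {\<lambda>_. False}"
  shows "observed_sum g B w = (\<Sum>e\<in>R. observed_sum g (torus_class N n e) w)"
    and "card (stars B w) = (\<Sum>e\<in>R. card (stars (torus_class N n e) w))"
proof -
  have finB: "finite B" unfolding B_def by (simp add: finite_torus)
  have types: "boundary_type N n ` B \<subseteq> R"
    unfolding B_def R_def by (auto simp: boundary_type_eq_False_iff)
  have classes: "{u \<in> B. boundary_type N n u = e} = torus_class N n e" if "e \<in> R" for e
    using that boundary_type_eq_False_iff[of N n] unfolding B_def R_def torus_class_def by auto
  show "observed_sum g B w = (\<Sum>e\<in>R. observed_sum g (torus_class N n e) w)"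
    using observed_sum_partition[OF finB _ types] classes by simp
  show "card (stars B w) = (\<Sum>e\<in>R. card (stars (torus_class N n e) w))"
    using card_stars_partition[OF finB _ types] classes by simp
qed

lemma expectation_abs_observed_sum_boundary:
  fixes p :: "'a::finite pmf" and q :: "'b::finite pmf"
    and \<phi> :: "(('d::finite \<Rightarrow> int) \<Rightarrow> 'a) \<Rightarrow> (('d \<Rightarrow> int) \<Rightarrow> 'b)"
    and f :: "nat \<Rightarrow> (('d \<Rightarrow> int) \<Rightarrow> 'a) \<Rightarrow> 'b option" and g :: "'b \<Rightarrow> real"
  assumes hom: "is_homomorphism p q \<phi>"
    and local_fn: "\<forall>n. AE x in iid p. trunc_code p \<phi> n x = f n (restrict x (cube n))"
    and N: "4 * n + 4 \<le> N"
    and g_bound: "\<forall>b. \<bar>g b\<bar> \<le> C" and mean0: "measure_pmf.expectation q g = 0"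
  defines "B \<equiv> torus N - torus_interior N n"
  shows "measure_pmf.expectation (torus_iid N p) (\<lambda>xh. \<bar>observed_sum g B (torus_code f N n xh)\<bar>)
    \<le> real CARD('d \<Rightarrow> bool) * sqrt ((real (card (torus N :: ('d \<Rightarrow> int) set))
          - real (card (torus_interior N n :: ('d \<Rightarrow> int) set))) * measure_pmf.expectation q (\<lambda>b. (g b)\<^sup>2))
      + C * measure_pmf.expectation (torus_iid N p) (\<lambda>xh. real (card (stars B (torus_code f N n xh))))"
proof -
  define R where "R = (UNIV :: ('d \<Rightarrow> bool) set) - {\<lambda>_. False}"
  define s where "s = sqrt (real (card B) * measure_pmf.expectation q (\<lambda>b. (g b)\<^sup>2))"
  have card_boundary: "real (card B)
      = real (card (torus N :: ('d \<Rightarrow> int) set)) - real (card (torus_interior N n :: ('d \<Rightarrow> int) set))"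
    unfolding B_def
    by (simp add: card_Diff_subset finite_torus_interior torus_interior_subset of_nat_diff card_mono finite_torus)
  define E where "E h = measure_pmf.expectation (torus_iid N p) h" for h :: "(('d \<Rightarrow> int) \<Rightarrow> 'a) \<Rightarrow> real"
  define tc where "tc = torus_code f N n"
  have partition: "observed_sum g B w = (\<Sum>e\<in>R. observed_sum g (torus_class N n e) w)"
      "card (stars B w) = (\<Sum>e\<in>R. card (stars (torus_class N n e) w))" for w
    unfolding B_def R_def by (rule torus_boundary_partition)+
  have "E (\<lambda>xh. \<bar>observed_sum g B (tc xh)\<bar>) \<le> E (\<lambda>xh. \<Sum>e\<in>R. \<bar>observed_sum g (torus_class N n e) (tc xh)\<bar>)"
    unfolding E_def partition(1) by (intro integral_mono integrable_torus_iid sum_abs)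
  also have "\<dots> = (\<Sum>e\<in>R. E (\<lambda>xh. \<bar>observed_sum g (torus_class N n e) (tc xh)\<bar>))"
    unfolding E_def by (simp add: Bochner_Integration.integral_sum integrable_torus_iid)
  also have "\<dots> \<le> (\<Sum>e\<in>R. s + C * E (\<lambda>xh. real (card (stars (torus_class N n e) (tc xh)))))"
  proof (rule sum_mono)
    fix e assume "e \<in> R"
    then have "card (torus_class N n e) \<le> card B"
      unfolding R_def B_def by (intro card_mono torus_class_subset_boundary) (auto simp: finite_torus)
    then have "sqrt (real (card (torus_class N n e)) * measure_pmf.expectation q (\<lambda>b. (g b)\<^sup>2)) \<le> s"
      unfolding s_def by (intro real_sqrt_le_mono mult_right_mono integral_nonneg_AE) auto
    then show "E (\<lambda>xh. \<bar>observed_sum g (torus_class N n e) (tc xh)\<bar>)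
        \<le> s + C * E (\<lambda>xh. real (card (stars (torus_class N n e) (tc xh))))"
      using expectation_abs_observed_sum_class[OF hom local_fn N g_bound mean0, of e]
      unfolding E_def tc_def by linarith
  qed
  also have "\<dots> = real (card R) * s + C * E (\<lambda>xh. real (card (stars B (tc xh))))"
    unfolding E_def partition(2)
    by (simp add: sum.distrib sum_distrib_left Bochner_Integration.integral_sum integrable_torus_iid)
  also have "\<dots> \<le> real CARD('d \<Rightarrow> bool) * s + C * E (\<lambda>xh. real (card (stars B (tc xh))))"
    unfolding s_def by (intro add_right_mono mult_right_mono) (auto intro: card_mono)
  finally show ?thesis
    unfolding E_def tc_def s_def card_boundary .
qed

section \<open>The entropy sum of the torus code\<close>

lemma observed_sum_subset_diff:
  "I \<subseteq> T \<Longrightarrow> finite T \<Longrightarrow> observed_sum g T w = observed_sum g (T - I) w + observed_sum g I w"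
  unfolding observed_sum_def by (rule sum.subset_diff)

lemma card_stars_subset_diff:
  assumes "I \<subseteq> T" "finite T"
  shows "card (stars T w) = card (stars (T - I) w) + card (stars I w)"
proof -
  have "stars T w = stars (T - I) w \<union> stars I w" using assms(1) by (auto simp: stars_def)
  moreover have "finite (stars T w)" using assms(2) by (simp add: stars_def)
  ultimately show ?thesis by (subst card_Un_disjoint[symmetric]) (auto simp: stars_def)
qed

lemma abs_max_divide_diff_le:
  fixes a b s :: real
  assumes "s > 0"
  shows "\<bar>max (a / s) 0 - max (b / s) 0\<bar> \<le> \<bar>a - b\<bar> / s"
  using assms by (auto simp: max_def field_simps abs_le_iff)

lemma abs_integral_pos_part_add_diff_le:
  fixes X Y :: "'x \<Rightarrow> real" and s :: real
  assumes X: "integrable M X" and Y: "integrable M Y" and s: "s > 0"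
  shows "\<bar>(\<integral>x. max ((X x + Y x) / s) 0 \<partial>M) - (\<integral>x. max (Y x / s) 0 \<partial>M)\<bar> \<le> (\<integral>x. \<bar>X x\<bar> \<partial>M) / s"
proof -
  have "\<bar>(\<integral>x. max ((X x + Y x) / s) 0 \<partial>M) - (\<integral>x. max (Y x / s) 0 \<partial>M)\<bar>
      \<le> (\<integral>x. \<bar>max ((X x + Y x) / s) 0 - max (Y x / s) 0\<bar> \<partial>M)"
    using X Y by (simp add: integral_abs_bound flip: Bochner_Integration.integral_diff)
  also have "\<dots> \<le> (\<integral>x. \<bar>X x\<bar> / s \<partial>M)"
  proof (intro integral_mono)
    show "\<bar>max ((X x + Y x) / s) 0 - max (Y x / s) 0\<bar> \<le> \<bar>X x\<bar> / s" for x
      using abs_max_divide_diff_le[OF s, of "X x + Y x" "Y x"] by simp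
  qed (use X Y in auto)
  finally show ?thesis by simp
qed

lemma torus_code_entropy_estimate:
  fixes p :: "'a::finite pmf" and q :: "'b::finite pmf"
    and \<phi> :: "(('d::finite \<Rightarrow> int) \<Rightarrow> 'a) \<Rightarrow> (('d \<Rightarrow> int) \<Rightarrow> 'b)"
    and f :: "nat \<Rightarrow> (('d \<Rightarrow> int) \<Rightarrow> 'a) \<Rightarrow> 'b option" and g :: "'b \<Rightarrow> real"
  assumes hom: "is_homomorphism p q \<phi>"
    and local_fn: "\<forall>n. AE x in iid p. trunc_code p \<phi> n x = f n (restrict x (cube n))"
    and N: "4 * n + 4 \<le> N"
    and g_bound: "\<forall>b. \<bar>g b\<bar> \<le> C" and mean0: "measure_pmf.expectation q g = 0"
  defines "M \<equiv> real (card (torus N :: ('d \<Rightarrow> int) set))"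
    and "m \<equiv> card (torus_interior N n :: ('d \<Rightarrow> int) set)"
  shows "\<bar>measure_pmf.expectation (torus_iid N p)
            (\<lambda>xh. max (observed_sum g (torus N) (torus_code f N n xh) / sqrt M) 0)
          - sqrt (real m / M) * measure_pmf.expectation (Pi_pmf {..<m} undefined (\<lambda>_. q))
            (\<lambda>y. max ((\<Sum>i<m. g (y i)) / sqrt (real m)) 0)\<bar>
    \<le> (real CARD('d \<Rightarrow> bool) * sqrt ((M - real m) * measure_pmf.expectation q (\<lambda>b. (g b)\<^sup>2))
        + C * measure_pmf.expectation (torus_iid N p) (\<lambda>xh. real (card (Jc f N n xh)))) / sqrt M"
proof -
  define E where "E h = measure_pmf.expectation (torus_iid N p) h" for h :: "(('d \<Rightarrow> int) \<Rightarrow> 'a) \<Rightarrow> real"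
  define tc where "tc = torus_code f N n"
  define I where "I = (torus_interior N n :: ('d \<Rightarrow> int) set)"
  define B where "B = torus N - I"
  have M: "M > 0" unfolding M_def using N by (simp add: card_torus)
  have m: "m > 0" unfolding m_def using N by (subst card_torus_interior) auto
  have split: "observed_sum g (torus N) w = observed_sum g B w + observed_sum g I w" for w
    unfolding B_def I_def by (intro observed_sum_subset_diff torus_interior_subset finite_torus)
  have Jc: "real (card (Jc f N n xh)) = real (card (stars B (tc xh))) + real (card (stars I (tc xh)))" for xh
    using card_stars_subset_diff[OF torus_interior_subset[of N n] finite_torus, where w="tc xh"]
    unfolding Jc_def B_def I_def tc_def stars_def by simp
  have boundary: "\<bar>E (\<lambda>xh. max (observed_sum g (torus N) (tc xh) / sqrt M) 0)
      - E (\<lambda>xh. max (observed_sum g I (tc xh) / sqrt M) 0)\<bar> \<le> E (\<lambda>xh. \<bar>observed_sum g B (tc xh)\<bar>) / sqrt M"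
    unfolding E_def split using M
    by (intro abs_integral_pos_part_add_diff_le integrable_torus_iid) simp
  have interior: "\<bar>E (\<lambda>xh. max (observed_sum g I (tc xh) / sqrt M) 0)
      - sqrt (real m / M) * measure_pmf.expectation (Pi_pmf {..<m} undefined (\<lambda>_. q))
          (\<lambda>y. max ((\<Sum>i<m. g (y i)) / sqrt (real m)) 0)\<bar>
      \<le> C * E (\<lambda>xh. real (card (stars I (tc xh)))) / sqrt M"
  proof -
    have "max (s / sqrt M) 0 = sqrt (real m / M) * max (s / sqrt (real m)) 0" for s
      using m M by (simp add: max_mult_distrib_left real_sqrt_divide)
    moreover have "\<forall>s t. \<bar>max (s / sqrt M) 0 - max (t / sqrt M) 0\<bar> \<le> 1 / sqrt M * \<bar>s - t\<bar>"
      using abs_max_divide_diff_le M by simp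
    note torus_coupling_lipschitz[OF hom local_fn order_refl g_bound this, where N=N and n=n, folded m_def]
    ultimately show ?thesis unfolding E_def tc_def I_def by simp
  qed
  have "E (\<lambda>xh. \<bar>observed_sum g B (tc xh)\<bar>)
      \<le> real CARD('d \<Rightarrow> bool) * sqrt ((M - real m) * measure_pmf.expectation q (\<lambda>b. (g b)\<^sup>2))
        + C * E (\<lambda>xh. real (card (stars B (tc xh))))"
    using expectation_abs_observed_sum_boundary[OF hom local_fn N g_bound mean0]
    unfolding E_def tc_def B_def I_def M_def m_def .
  then have "E (\<lambda>xh. \<bar>observed_sum g B (tc xh)\<bar>) / sqrt M
      \<le> (real CARD('d \<Rightarrow> bool) * sqrt ((M - real m) * measure_pmf.expectation q (\<lambda>b. (g b)\<^sup>2))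
        + C * E (\<lambda>xh. real (card (stars B (tc xh))))) / sqrt M"
    using M by (simp add: divide_right_mono)
  moreover have "E (\<lambda>xh. real (card (Jc f N n xh)))
      = E (\<lambda>xh. real (card (stars B (tc xh)))) + E (\<lambda>xh. real (card (stars I (tc xh))))"
    unfolding E_def Jc by (simp add: Bochner_Integration.integral_add integrable_torus_iid)
  ultimately show ?thesis
    using boundary interior unfolding E_def[symmetric] tc_def[symmetric]
    by (simp add: abs_le_iff add_divide_distrib distrib_left)
qed

lemma nat_floor_fraction_tendsto_zero:
  fixes \<delta> :: "nat \<Rightarrow> real"
  assumes "\<delta> \<longlonglongrightarrow> 0"
  shows "(\<lambda>N. real (nat \<lfloor>\<delta> N * real N\<rfloor>) / real N) \<longlonglongrightarrow> 0"
proof (rule tendsto_sandwich[where f="\<lambda>_. 0" and h="\<lambda>N. \<bar>\<delta> N\<bar>"])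
  have "real (nat \<lfloor>\<delta> N * real N\<rfloor>) \<le> \<bar>\<delta> N\<bar> * real N" for N
  proof (cases "\<delta> N \<ge> 0")
    case True
    then show ?thesis using of_int_floor_le[of "\<delta> N * real N"] by simp
  next
    case False
    then have "\<delta> N * real N \<le> 0" by (simp add: mult_nonpos_nonneg)
    then show ?thesis by simp
  qed
  then show "\<forall>\<^sub>F N in sequentially. real (nat \<lfloor>\<delta> N * real N\<rfloor>) / real N \<le> \<bar>\<delta> N\<bar>"
    by (intro always_eventually allI) (simp add: divide_le_eq mult.commute)
  show "(\<lambda>N. \<bar>\<delta> N\<bar>) \<longlonglongrightarrow> 0" using tendsto_rabs_zero[OF assms] .
qed auto

lemma torus_interior_asymptotics:
  fixes n :: "nat \<Rightarrow> nat"
  assumes small: "(\<lambda>N. real (n N) / real N) \<longlonglongrightarrow> 0"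
  shows "\<forall>\<^sub>F N in sequentially. 4 * n N + 4 \<le> N"
    and "(\<lambda>N. real (card (torus_interior N (n N) :: ('d::finite \<Rightarrow> int) set))
            / real (card (torus N :: ('d \<Rightarrow> int) set))) \<longlonglongrightarrow> 1"
    and "filterlim (\<lambda>N. card (torus_interior N (n N) :: ('d::finite \<Rightarrow> int) set)) at_top sequentially"
proof -
  show large: "\<forall>\<^sub>F N in sequentially. 4 * n N + 4 \<le> N"
    using order_tendstoD(2)[OF small, of "1/8", simplified] eventually_ge_at_top[of 8]
  proof eventually_elim
    case (elim N)
    then show ?case by (simp add: divide_less_eq)
  qed
  have interior_eq: "\<forall>\<^sub>F N in sequentially.
      card (torus_interior N (n N) :: ('d \<Rightarrow> int) set) = (N - 2 * n N) ^ CARD('d)"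
    using large by eventually_elim (simp add: card_torus_interior)
  have "(\<lambda>N. (1 - 2 * (real (n N) / real N)) ^ CARD('d)) \<longlonglongrightarrow> (1 - 2 * 0) ^ CARD('d)"
    by (intro tendsto_intros small)
  moreover have "\<forall>\<^sub>F N in sequentially. (1 - 2 * (real (n N) / real N)) ^ CARD('d)
      = real (card (torus_interior N (n N) :: ('d \<Rightarrow> int) set)) / real (card (torus N :: ('d \<Rightarrow> int) set))"
    using large interior_eq
  proof eventually_elim
    case (elim N)
    then have "1 - 2 * (real (n N) / real N) = real (N - 2 * n N) / real N"
      by (simp add: of_nat_diff field_simps)
    then show ?case using elim by (simp add: card_torus power_divide)
  qed
  ultimately show "(\<lambda>N. real (card (torus_interior N (n N) :: ('d::finite \<Rightarrow> int) set))
      / real (card (torus N :: ('d \<Rightarrow> int) set))) \<longlonglongrightarrow> 1"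
    by (simp add: Lim_transform_eventually)
  have "filterlim (\<lambda>N. N - 2 * n N) at_top sequentially"
    unfolding filterlim_at_top
  proof
    fix Z :: nat
    show "\<forall>\<^sub>F N in sequentially. Z \<le> N - 2 * n N"
      using large eventually_ge_at_top[of "2 * Z"] by eventually_elim linarith
  qed
  then have "filterlim (\<lambda>N. (N - 2 * n N) ^ CARD('d)) at_top sequentially"
    by (rule filterlim_power_at_top) simp
  then show "filterlim (\<lambda>N. card (torus_interior N (n N) :: ('d::finite \<Rightarrow> int) set)) at_top sequentially"
    by (rule filterlim_at_top_mono) (use interior_eq in \<open>eventually_elim, simp\<close>)
qed

lemma error_term_tendsto_zero:
  fixes M m e :: "nat \<Rightarrow> real"
  assumes M: "\<forall>\<^sub>F N in sequentially. 0 < M N" and ratio: "(\<lambda>N. m N / M N) \<longlonglongrightarrow> 1"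
    and e: "(\<lambda>N. e N / sqrt (M N)) \<longlonglongrightarrow> 0"
  shows "(\<lambda>N. (D * sqrt ((M N - m N) * s) + C * e N) / sqrt (M N)) \<longlonglongrightarrow> 0"
proof -
  have "(\<lambda>N. D * sqrt ((1 - m N / M N) * s) + C * (e N / sqrt (M N))) \<longlonglongrightarrow> D * sqrt ((1 - 1) * s) + C * 0"
    by (intro tendsto_intros ratio e)
  moreover have "\<forall>\<^sub>F N in sequentially.
      D * sqrt ((1 - m N / M N) * s) + C * (e N / sqrt (M N)) = (D * sqrt ((M N - m N) * s) + C * e N) / sqrt (M N)"
    using M
  proof eventually_elim
    case (elim N)
    then have "sqrt ((M N - m N) * s) / sqrt (M N) = sqrt ((1 - m N / M N) * s)"
      by (simp add: real_sqrt_divide[symmetric] field_simps)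
    then show ?case by (simp add: add_divide_distrib flip: times_divide_eq_right)
  qed
  ultimately show ?thesis by (auto intro: Lim_transform_eventually)
qed

lemma torus_code_entropy_clt:
  fixes p :: "'a::finite pmf" and q :: "'b::finite pmf"
    and \<phi> :: "(('d::finite \<Rightarrow> int) \<Rightarrow> 'a) \<Rightarrow> (('d \<Rightarrow> int) \<Rightarrow> 'b)"
    and f :: "nat \<Rightarrow> (('d \<Rightarrow> int) \<Rightarrow> 'a) \<Rightarrow> 'b option"
    and \<delta> :: "nat \<Rightarrow> real"
  assumes hom: "is_homomorphism p q \<phi>"
    and local_fn: "\<forall>n. AE x in iid p. trunc_code p \<phi> n x = f n (restrict x (cube n))"
    and lim: "\<delta> \<longlonglongrightarrow> 0"
    and stars_small: "(\<lambda>N. measure_pmf.expectation (torus_iid N p)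
              (\<lambda>xh. real (card (Jc f N (nat \<lfloor>\<delta> N * real N\<rfloor>) xh)))
            / sqrt (real (card (torus N :: ('d \<Rightarrow> int) set)))) \<longlonglongrightarrow> 0"
  shows "(\<lambda>N. measure_pmf.expectation (torus_iid N p)
              (\<lambda>xh. max ((1 / sqrt (real (card (torus N :: ('d \<Rightarrow> int) set))))
                   * (\<Sum>u\<in>{u \<in> torus N. torus_code f N (nat \<lfloor>\<delta> N * real N\<rfloor>) xh u \<noteq> None}.
                        shannon_entropy q + ln (pmf q (the (torus_code f N (nat \<lfloor>\<delta> N * real N\<rfloor>) xh u))))) 0))
         \<longlonglongrightarrow> sqrt (measure_pmf.variance q (\<lambda>b. ln (pmf q b))) / sqrt (2 * pi)"
    (is "?A \<longlonglongrightarrow> _")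
proof -
  define n where "n N = nat \<lfloor>\<delta> N * real N\<rfloor>" for N
  define g where "g b = shannon_entropy q + ln (pmf q b)" for b
  define C where "C = (\<Sum>b\<in>UNIV. \<bar>g b\<bar>)"
  define s2 where "s2 = measure_pmf.expectation q (\<lambda>b. (g b)\<^sup>2)"
  define M where "M N = real (card (torus N :: ('d \<Rightarrow> int) set))" for N
  define m where "m N = card (torus_interior N (n N) :: ('d \<Rightarrow> int) set)" for N
  define Z where "Z k = measure_pmf.expectation (Pi_pmf {..<k} undefined (\<lambda>_. q))
      (\<lambda>y. max ((\<Sum>i<k. g (y i)) / sqrt (real k)) 0)" for k
  define EJ where "EJ N = measure_pmf.expectation (torus_iid N p) (\<lambda>xh. real (card (Jc f N (n N) xh)))" for N
  define eps where "eps N = (real CARD('d \<Rightarrow> bool) * sqrt ((M N - real (m N)) * s2) + C * EJ N) / sqrt (M N)"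
    for N
  have g_bound: "\<forall>b. \<bar>g b\<bar> \<le> C" unfolding C_def by (auto intro: member_le_sum)
  have mean0: "measure_pmf.expectation q g = 0"
    unfolding g_def by (rule expectation_entropy_plus_ln_pmf)
  note window_small = nat_floor_fraction_tendsto_zero[OF lim, folded n_def]
  note large = torus_interior_asymptotics(1)[OF window_small]
  note ratio = torus_interior_asymptotics(2)[where 'd='d, OF window_small, folded m_def M_def]
  note interior_large = torus_interior_asymptotics(3)[where 'd='d, OF window_small, folded m_def]
  have "(\<lambda>N. sqrt (real (m N) / M N) * Z (m N)) \<longlonglongrightarrow> sqrt 1 * (sqrt s2 / sqrt (2 * pi))"
    unfolding Z_def s2_def
    by (intro tendsto_mult tendsto_real_sqrt ratio
        filterlim_compose[OF clt_expectation_pos_part[OF mean0] interior_large])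
  then have iid_limit: "(\<lambda>N. sqrt (real (m N) / M N) * Z (m N))
      \<longlonglongrightarrow> sqrt (measure_pmf.variance q (\<lambda>b. ln (pmf q b))) / sqrt (2 * pi)"
    by (simp add: s2_def g_def variance_ln_pmf)
  have "eps \<longlonglongrightarrow> 0"
    unfolding eps_def
  proof (rule error_term_tendsto_zero[OF _ ratio])
    show "\<forall>\<^sub>F N in sequentially. 0 < M N"
      using eventually_gt_at_top[of 0] by eventually_elim (simp add: M_def card_torus)
    show "(\<lambda>N. EJ N / sqrt (M N)) \<longlonglongrightarrow> 0"
      using stars_small unfolding EJ_def M_def n_def .
  qed
  have A_eq: "?A N = measure_pmf.expectation (torus_iid N p)
      (\<lambda>xh. max (observed_sum g (torus N) (torus_code f N (n N) xh) / sqrt (M N)) 0)" for N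
    by (simp add: observed_sum_eq_sum_Some finite_torus n_def g_def M_def)
  have "\<forall>\<^sub>F N in sequentially. norm (?A N - sqrt (real (m N) / M N) * Z (m N)) \<le> eps N"
    using large
  proof eventually_elim
    case (elim N)
    show ?case
      unfolding A_eq Z_def eps_def EJ_def M_def m_def s2_def real_norm_def
      by (rule torus_code_entropy_estimate[OF hom local_fn elim g_bound mean0])
  qed
  then have "(\<lambda>N. ?A N - sqrt (real (m N) / M N) * Z (m N)) \<longlonglongrightarrow> 0"
    using \<open>eps \<longlonglongrightarrow> 0\<close> by (rule Lim_null_comparison)
  from tendsto_add[OF this iid_limit] show ?thesis by simp
qed

theorem proposition8:
  fixes p :: "'a::finite pmf" and q :: "'b::finite pmf"
    and \<phi> :: "(('d::finite \<Rightarrow> int) \<Rightarrow> 'a) \<Rightarrow> (('d \<Rightarrow> int) \<Rightarrow> 'b)"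
    and f :: "nat \<Rightarrow> (('d \<Rightarrow> int) \<Rightarrow> 'a) \<Rightarrow> 'b option"
    and \<delta> :: "nat \<Rightarrow> real"
  assumes entropy_eq: "shannon_entropy p = shannon_entropy q"
    and hom: "is_homomorphism p q \<phi>"
    and fin: "finitary p \<phi>"
    and moment: "(\<integral>\<^sup>+ x. ennreal (real (the_enat (coding_radius p \<phi> x)) powr (real CARD('d) / 2)) \<partial>iid p) < \<infinity>"
    and local_fn: "\<forall>n. AE x in iid p. trunc_code p \<phi> n x = f n (restrict x (cube n))"
    and dec: "decseq \<delta>" and lim: "\<delta> \<longlonglongrightarrow> 0"
    and small: "(\<lambda>N. measure_pmf.expectation (torus_iid N p)
                  (\<lambda>xh. real (card (Jc f N (nat \<lfloor>\<delta> N * real N\<rfloor>) xh))))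
                \<in> o(\<lambda>N. real N powr (real CARD('d) / 2))"
  shows "((\<lambda>N. measure_pmf.expectation (torus_iid N p)
              (\<lambda>xh. real (card (Jc f N (nat \<lfloor>\<delta> N * real N\<rfloor>) xh)))
            / sqrt (real (card (torus N :: ('d \<Rightarrow> int) set)))) \<longlonglongrightarrow> 0)
    \<and> ((\<lambda>N. measure_pmf.expectation (torus_iid N p)
              (\<lambda>xh :: ('d \<Rightarrow> int) \<Rightarrow> 'a. max ((1 / sqrt (real (card (torus N :: ('d \<Rightarrow> int) set))))
                   * (\<Sum>u\<in>torus N. shannon_entropy p + ln (pmf p (xh u)))) 0))
         \<longlonglongrightarrow> sqrt (measure_pmf.variance p (\<lambda>a. ln (pmf p a))) / sqrt (2 * pi))
    \<and> ((\<lambda>N. measure_pmf.expectation (torus_iid N p)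
              (\<lambda>xh. max ((1 / sqrt (real (card (torus N :: ('d \<Rightarrow> int) set))))
                   * (\<Sum>u\<in>{u \<in> torus N. torus_code f N (nat \<lfloor>\<delta> N * real N\<rfloor>) xh u \<noteq> None}.
                        shannon_entropy q + ln (pmf q (the (torus_code f N (nat \<lfloor>\<delta> N * real N\<rfloor>) xh u))))) 0))
         \<longlonglongrightarrow> sqrt (measure_pmf.variance q (\<lambda>b. ln (pmf q b))) / sqrt (2 * pi))"
proof -
  have stars_small: "(\<lambda>N. measure_pmf.expectation (torus_iid N p)
              (\<lambda>xh. real (card (Jc f N (nat \<lfloor>\<delta> N * real N\<rfloor>) xh)))
            / sqrt (real (card (torus N :: ('d \<Rightarrow> int) set)))) \<longlonglongrightarrow> 0"
    using smalloD_tendsto[OF small] unfolding sqrt_card_torus .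
  show ?thesis
    using stars_small torus_entropy_clt[of p] torus_code_entropy_clt[OF hom local_fn lim stars_small]
    by blast
qed

end
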